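(* Let $\rho_1,\sigma_1\in H^2(-1,0)$ and $\rho_2,\sigma_2\in H^2(0,1)$ be uniformly positive and $q_1\in L^1(-1,0)$, $q_2\in L^1(0,1)$ nonnegative. Let $\tilde u(x,\lambda)$ solve $-(\sigma_1u')'+q_1u=\lambda\rho_1u$ on $(-1,0)$ with $u(-1)=0$, $u'(-1)=1$, and $\tilde v(x,\lambda)$ solve $-(\sigma_2v')'+q_2v=\lambda\rho_2v$ on $(0,1)$ with $v(1)=0$, $v'(1)=-1$. Let $(\mu_n)_{n\ge1}$ be the nondecreasing arrangement $0<\mu_1\le\mu_2\le\cdots$ of the union of the Dirichlet eigenvalues $\mu^-_j$ of $-(\sigma_1y')'+q_1y=\lambda\rho_1y$ on $(-1,0)$, $y(-1)=y(0)=0$, and the Dirichlet eigenvalues $\mu^+_k$ of $-(\sigma_2y')'+q_2y=\lambda\rho_2y$ on $(0,1)$, $y(0)=y(1)=0$. Define the meromorphic function $$F(\lambda)=\frac{\sigma_1(0)\tilde v(0,\lambda)\tilde u_x(0^-,\lambda)-\sigma_2(0)\tilde u(0,\lambda)\tilde v_x(0^+,\lambda)}{\tilde u(0,\lambda)\tilde v(0,\lambda)},\qquad \lambda\in\mathbb C\setminus\{\mu_n\}.$$ Then $F$ is decreasing on $(-\infty,\mu_1)$ and on each interval $(\mu_n,\mu_{n+1})$, $n\ge1$, with $\mu_n\ne\mu_{n+1}$; furthermore, on each of these intervals it decreases from $+\infty$ to $-\infty$. *)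

theory Defs
  imports "HOL-Analysis.Analysis"
begin

text \<open>Sobolev space H^2(a,b) in one dimension: f is C^1 on [a,b] and its derivative
  is an indefinite integral of an L^2 function g (the second weak derivative).\<close>
definition H2_on :: "real \<Rightarrow> real \<Rightarrow> (real \<Rightarrow> real) \<Rightarrow> bool" where
  "H2_on a b f \<longleftrightarrow> (\<exists>f' g.
      (\<forall>x\<in>{a..b}. (f has_real_derivative f' x) (at x within {a..b})) \<and>
      (\<forall>x\<in>{a..b}. (g has_integral (f' x - f' a)) {a..x}) \<and>
      (\<lambda>x. (g x)\<^sup>2) integrable_on {a..b})"

definition uniformly_positive_on :: "real set \<Rightarrow> (real \<Rightarrow> real) \<Rightarrow> bool" where
  "uniformly_positive_on S f \<longleftrightarrow> (\<exists>c>0. \<forall>x\<in>S. c \<le> f x)"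

text \<open>y (with derivative y') is a solution on [a,b] of
  -(\<sigma> y')' + q y = lam \<rho> y in the Caratheodory sense:
  y is differentiable, and the quasi-derivative \<sigma> y' is absolutely continuous with
  (\<sigma> y')' = (q - lam \<rho>) y almost everywhere.\<close>
definition sl_solution ::
  "(real \<Rightarrow> real) \<Rightarrow> (real \<Rightarrow> real) \<Rightarrow> (real \<Rightarrow> real) \<Rightarrow> real \<Rightarrow> real \<Rightarrow> real
     \<Rightarrow> (real \<Rightarrow> real) \<Rightarrow> (real \<Rightarrow> real) \<Rightarrow> bool" where
  "sl_solution \<sigma> q \<rho> a b lam y y' \<longleftrightarrow>
     (\<forall>x\<in>{a..b}. (y has_real_derivative y' x) (at x within {a..b})) \<and>
     (\<forall>x\<in>{a..b}. ((\<lambda>t. (q t - lam * \<rho> t) * y t) has_integral (\<sigma> x * y' x - \<sigma> a * y' a)) {a..x})"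

definition dirichlet_eigenvalue ::
  "(real \<Rightarrow> real) \<Rightarrow> (real \<Rightarrow> real) \<Rightarrow> (real \<Rightarrow> real) \<Rightarrow> real \<Rightarrow> real \<Rightarrow> real \<Rightarrow> bool" where
  "dirichlet_eigenvalue \<sigma> q \<rho> a b lam \<longleftrightarrow>
     (\<exists>y y'. sl_solution \<sigma> q \<rho> a b lam y y' \<and> y a = 0 \<and> y b = 0 \<and> (\<exists>x\<in>{a..b}. y x \<noteq> 0))"

end

theory Submission
  imports Defs
begin

text \<open>
  Both halves of \<open>F\<close> are Weyl functions: \<open>F = m\<^sub>1 + m\<^sub>2\<close> with
  \<open>m\<^sub>1(\<lambda>) = \<sigma>\<^sub>1(0) u'(0,\<lambda>) / u(0,\<lambda>)\<close>, and \<open>m\<^sub>2\<close> the same quotient for the problem on \<open>(0,1)\<close>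
  reflected onto \<open>(-1,0)\<close>. For one such \<open>m\<close>, continuous dependence on \<open>\<lambda>\<close> (Gronwall) and
  the Wronskian identity give \<open>m'(\<lambda>) = - \<integral> \<rho> u(\<cdot>,\<lambda>)\<^sup>2 / u(0,\<lambda>)\<^sup>2 < 0\<close> away from the Dirichlet
  eigenvalues, which are exactly the zeros of \<open>u(0,\<cdot>)\<close>. At such a zero \<open>u'(0,\<lambda>) \<noteq> 0\<close> by
  uniqueness, so \<open>m\<close> jumps from \<open>-\<infinity>\<close> to \<open>+\<infinity>\<close> there; and the energy identity
  \<open>\<sigma>(0) u u'(0) = \<integral> q u\<^sup>2 - \<lambda> \<integral> \<rho> u\<^sup>2 + \<integral> \<sigma> u'\<^sup>2\<close> with \<open>q \<ge> 0\<close> forces \<open>m(\<lambda>) \<rightarrow> +\<infinity>\<close> as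
  \<open>\<lambda> \<rightarrow> -\<infinity>\<close>. Adding the two functions, each interval between consecutive points of the
  union of the two spectra is traversed decreasingly from \<open>+\<infinity>\<close> to \<open>-\<infinity>\<close>.
\<close>

lemma locally_nonincreasing_le_start:
  fixes \<Psi> :: "real \<Rightarrow> real"
  assumes "\<delta> > 0"
    and local: "\<And>c d. a \<le> c \<Longrightarrow> c \<le> d \<Longrightarrow> d \<le> b \<Longrightarrow> d - c < \<delta> \<Longrightarrow> \<Psi> d \<le> \<Psi> c"
    and x: "x \<in> {a..b}"
  shows "\<Psi> x \<le> \<Psi> a"
proof -
  obtain n :: nat where n: "real n > (x - a) / \<delta>" "n \<ge> 1"
    by (metis One_nat_def reals_Archimedean2 less_le_trans max.cobounded1 max.cobounded2
        of_nat_le_iff of_nat_max)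
  define h where "h = (x - a) / n"
  have h: "0 \<le> h" "h < \<delta>" "a + n * h = x"
    using x n \<open>\<delta> > 0\<close> by (auto simp: h_def divide_less_eq mult.commute pos_divide_less_eq)
  have "\<Psi> (a + k * h) \<le> \<Psi> a" if "k \<le> n" for k
    using that
  proof (induction k)
    case (Suc k)
    have "a + real (Suc k) * h \<le> x"
      using h Suc.prems by (metis add_le_cancel_left mult_right_mono of_nat_le_iff)
    then have "\<Psi> (a + real (Suc k) * h) \<le> \<Psi> (a + real k * h)"
      using h x by (intro local) (auto simp: algebra_simps)
    with Suc show ?case by simp
  qed simp
  then show ?thesis
    using h by (metis order_refl)
qed

lemma le_mult_exp_if_le_mult_one_minus:
  fixes \<kappa> X Y :: real
  assumes "0 \<le> \<kappa>" "\<kappa> \<le> 1/2" "0 \<le> X" and XY: "X * (1 - \<kappa>) \<le> Y"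
  shows "X \<le> Y * exp (2 * \<kappa>)"
proof -
  have "0 \<le> \<kappa> * (1 - 2 * \<kappa>)"
    using assms by simp
  then have "1 \<le> (1 - \<kappa>) * (1 + 2 * \<kappa>)"
    by (simp add: algebra_simps)
  also have "\<dots> \<le> (1 - \<kappa>) * exp (2 * \<kappa>)"
    using assms by (intro mult_left_mono exp_ge_add_one_self) auto
  finally have "X \<le> X * (1 - \<kappa>) * exp (2 * \<kappa>)"
    using mult_left_mono[OF _ \<open>0 \<le> X\<close>] by fastforce
  also have "\<dots> \<le> Y * exp (2 * \<kappa>)"
    using XY by (intro mult_right_mono) auto
  finally show ?thesis .
qed

lemma gronwall_increments:
  fixes R K :: "real \<Rightarrow> real"
  assumes K_cont: "continuous_on {a..b} K"
    and K_mono: "\<And>c d. a \<le> c \<Longrightarrow> c \<le> d \<Longrightarrow> d \<le> b \<Longrightarrow> K c \<le> K d"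
    and nonneg: "\<And>y. y \<in> {a..b} \<Longrightarrow> 0 \<le> C + R y"
    and increment: "\<And>c d. a \<le> c \<Longrightarrow> c \<le> d \<Longrightarrow> d \<le> b \<Longrightarrow> R d - R c \<le> (K d - K c) * (C + R d)"
    and x: "x \<in> {a..b}"
  shows "C + R x \<le> (C + R a) * exp (2 * (K x - K a))"
proof -
  have "uniformly_continuous_on {a..b} K"
    using K_cont by (intro compact_uniformly_continuous) auto
  then obtain \<delta> where "\<delta> > 0"
    and \<delta>: "\<And>c d. c \<in> {a..b} \<Longrightarrow> d \<in> {a..b} \<Longrightarrow> dist d c < \<delta> \<Longrightarrow> dist (K d) (K c) < 1/2"
    unfolding uniformly_continuous_on_def by (metis divide_pos_pos zero_less_numeral zero_less_one)
  \<comment> \<open>\<open>\<Psi>\<close> does not increase over any step on which \<open>K\<close> grows by at most \<open>1/2\<close>\<close>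
  define \<Psi> where "\<Psi> y = (C + R y) * exp (- 2 * K y)" for y
  have "\<Psi> d \<le> \<Psi> c" if cd: "a \<le> c" "c \<le> d" "d \<le> b" "d - c < \<delta>" for c d
  proof -
    have "dist (K d) (K c) < 1/2"
      using cd by (intro \<delta>) (auto simp: dist_real_def)
    then have "K d - K c \<le> 1/2"
      using abs_ge_self[of "K d - K c"] by (simp add: dist_real_def)
    moreover have "(C + R d) * (1 - (K d - K c)) \<le> C + R c"
      using increment[OF cd(1-3)] by (simp add: algebra_simps)
    ultimately have "C + R d \<le> (C + R c) * exp (2 * (K d - K c))"
      using K_mono[OF cd(1-3)] nonneg[of d] cd by (intro le_mult_exp_if_le_mult_one_minus) auto
    then have "(C + R d) * exp (- 2 * K d) \<le> (C + R c) * exp (2 * (K d - K c)) * exp (- 2 * K d)"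
      by (intro mult_right_mono) auto
    then show ?thesis
      by (simp add: \<Psi>_def mult.assoc flip: exp_add)
  qed
  then have "\<Psi> x \<le> \<Psi> a"
    by (intro locally_nonincreasing_le_start[OF \<open>\<delta> > 0\<close> _ x])
  then have "\<Psi> x * exp (2 * K x) \<le> \<Psi> a * exp (2 * K x)"
    by (intro mult_right_mono) auto
  then show ?thesis
    by (simp add: \<Psi>_def mult.assoc flip: exp_add)
qed

lemma absolutely_integrable_mult_continuous:
  fixes E k :: "real \<Rightarrow> real"
  assumes "continuous_on {a..b} E" "k absolutely_integrable_on {a..b}"
  shows "(\<lambda>t. k t * E t) absolutely_integrable_on {a..b}"
proof -
  have "(\<lambda>t. E t * k t) absolutely_integrable_on {a..b}"
  proof (rule absolutely_integrable_bounded_measurable_product_real)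
    show "E \<in> borel_measurable (lebesgue_on {a..b})"
      using assms(1) by (intro continuous_imp_measurable_on_sets_lebesgue) auto
    show "bounded (E ` {a..b})"
      using assms(1) by (intro compact_imp_bounded compact_continuous_image) auto
  qed (use assms in auto)
  then show ?thesis
    by (simp add: mult.commute)
qed

lemma integral_combine_subinterval:
  fixes f :: "real \<Rightarrow> real"
  assumes "f integrable_on {a..b}" "a \<le> c" "c \<le> d" "d \<le> b"
  shows "integral {a..d} f = integral {a..c} f + integral {c..d} f"
proof -
  have "f integrable_on {a..d}"
    by (rule integrable_subinterval_real[OF assms(1)]) (use assms in auto)
  from Henstock_Kurzweil_Integration.integral_combine[OF assms(2,3) this] show ?thesis
    by simp
qed

lemma integral_nonneg_subinterval:
  fixes f :: "real \<Rightarrow> real"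
  assumes "f integrable_on {a..b}" "\<And>t. t \<in> {a..b} \<Longrightarrow> 0 \<le> f t" "a \<le> c" "d \<le> b"
  shows "0 \<le> integral {c..d} f"
  using assms by (intro integral_nonneg integrable_subinterval_real[OF assms(1)]) auto

lemma gronwall_integral:
  fixes E k :: "real \<Rightarrow> real"
  assumes E_cont: "continuous_on {a..b} E" and E_nonneg: "\<And>t. t \<in> {a..b} \<Longrightarrow> 0 \<le> E t"
    and k: "k absolutely_integrable_on {a..b}" and k_nonneg: "\<And>t. t \<in> {a..b} \<Longrightarrow> 0 \<le> k t"
    and bound: "\<And>y. y \<in> {a..b} \<Longrightarrow> E y \<le> C + integral {a..y} (\<lambda>t. k t * E t)"
    and x: "x \<in> {a..b}"
  shows "E x \<le> C * exp (2 * integral {a..b} k)"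
proof -
  have kE_int: "(\<lambda>t. k t * E t) integrable_on {a..b}"
    using absolutely_integrable_mult_continuous[OF E_cont k] set_lebesgue_integral_eq_integral(1) by blast
  have k_int: "k integrable_on {a..b}"
    using k set_lebesgue_integral_eq_integral(1) by blast
  define R where "R y = integral {a..y} (\<lambda>t. k t * E t)" for y
  define K where "K y = integral {a..y} k" for y
  have kE_nonneg: "0 \<le> k t * E t" if "t \<in> {a..b}" for t
    using that E_nonneg k_nonneg by simp
  have R_mono: "C + R y \<le> C + R d" if "a \<le> y" "y \<le> d" "d \<le> b" for y d
    using integral_combine_subinterval[OF kE_int that]
      integral_nonneg_subinterval[OF kE_int kE_nonneg, of y d] that by (simp add: R_def)
  have "C + R x \<le> (C + R a) * exp (2 * (K x - K a))"
  proof (rule gronwall_increments[OF _ _ _ _ x])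
    show "continuous_on {a..b} K"
      unfolding K_def by (rule indefinite_integral_continuous_1[OF k_int])
    show "K c \<le> K d" if "a \<le> c" "c \<le> d" "d \<le> b" for c d
      using integral_combine_subinterval[OF k_int that]
        integral_nonneg_subinterval[OF k_int k_nonneg, of c d] that by (simp add: K_def)
    show "0 \<le> C + R y" if "y \<in> {a..b}" for y
      using bound[OF that] E_nonneg[OF that] by (simp add: R_def)
    show "R d - R c \<le> (K d - K c) * (C + R d)" if cd: "a \<le> c" "c \<le> d" "d \<le> b" for c d
    proof -
      have "R d - R c = integral {c..d} (\<lambda>t. k t * E t)"
        using integral_combine_subinterval[OF kE_int cd] by (simp add: R_def)
      also have "\<dots> \<le> integral {c..d} (\<lambda>t. k t * (C + R d))"
      proof (rule integral_le)
        show "(\<lambda>t. k t * E t) integrable_on {c..d}" "(\<lambda>t. k t * (C + R d)) integrable_on {c..d}"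
          using cd by (auto intro: integrable_subinterval_real[OF kE_int]
              integrable_on_mult_left[OF integrable_subinterval_real[OF k_int]])
        fix t assume t: "t \<in> {c..d}"
        have "E t \<le> C + R d"
          using bound[of t] R_mono[of t d] t cd by (simp add: R_def)
        then show "k t * E t \<le> k t * (C + R d)"
          using k_nonneg[of t] t cd by (intro mult_left_mono) auto
      qed
      also have "\<dots> = (K d - K c) * (C + R d)"
        using integral_combine_subinterval[OF k_int cd] by (simp add: K_def)
      finally show ?thesis .
    qed
  qed
  moreover have "0 \<le> C"
    using bound[of a] E_nonneg[of a] x by simp
  moreover have "K x \<le> integral {a..b} k"
    using integral_combine_subinterval[OF k_int, of x b] x
      integral_nonneg_subinterval[OF k_int k_nonneg, of x b] by (simp add: K_def)
  ultimately show ?thesis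
    using bound[OF x] by (simp add: R_def K_def) (smt (verit) exp_le_cancel_iff mult_left_mono)
qed

lemma zero_if_small_increments:
  fixes D \<Phi> :: "real \<Rightarrow> real"
  assumes small: "\<And>\<epsilon>. \<epsilon> > 0 \<Longrightarrow> \<exists>\<delta>>0. \<forall>c d. a \<le> c \<and> c \<le> d \<and> d \<le> b \<and> d - c < \<delta> \<longrightarrow>
                  \<bar>D d - D c\<bar> \<le> \<epsilon> * (\<Phi> d - \<Phi> c)"
    and "D a = 0" and x: "x \<in> {a..b}"
  shows "D x = 0"
proof -
  have bound: "\<bar>D x\<bar> \<le> \<epsilon> * (\<Phi> x - \<Phi> a)" if \<epsilon>: "\<epsilon> > 0" for \<epsilon>
  proof -
    obtain \<delta> where "\<delta> > 0" and \<delta>: "\<And>c d. a \<le> c \<Longrightarrow> c \<le> d \<Longrightarrow> d \<le> b \<Longrightarrow> d - c < \<delta> \<Longrightarrow>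
        \<bar>D d - D c\<bar> \<le> \<epsilon> * (\<Phi> d - \<Phi> c)"
      using small[OF \<epsilon>] by blast
    have "\<bar>D x\<bar> - \<epsilon> * \<Phi> x \<le> \<bar>D a\<bar> - \<epsilon> * \<Phi> a"
    proof (rule locally_nonincreasing_le_start[OF \<open>\<delta> > 0\<close> _ x])
      fix c d assume "a \<le> c" "c \<le> d" "d \<le> b" "d - c < \<delta>"
      from \<delta>[OF this] show "\<bar>D d\<bar> - \<epsilon> * \<Phi> d \<le> \<bar>D c\<bar> - \<epsilon> * \<Phi> c"
        using abs_triangle_ineq2[of "D d" "D c"] unfolding right_diff_distrib by linarith
    qed
    then show ?thesis
      using \<open>D a = 0\<close> by (simp add: algebra_simps)
  qed
  show ?thesis
  proof (rule ccontr)
    assume "D x \<noteq> 0"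
    define M where "M = \<bar>\<Phi> x - \<Phi> a\<bar> + 1"
    have "M > 0"
      by (simp add: M_def add_nonneg_pos)
    have "\<bar>D x\<bar> \<le> \<bar>D x\<bar> / (2 * M) * (\<Phi> x - \<Phi> a)"
      using \<open>D x \<noteq> 0\<close> \<open>M > 0\<close> by (intro bound) simp
    also have "\<dots> \<le> \<bar>D x\<bar> / (2 * M) * M"
      using \<open>M > 0\<close> by (intro mult_left_mono) (auto simp: M_def)
    also have "\<dots> = \<bar>D x\<bar> / 2"
      using \<open>M > 0\<close> by simp
    finally show False
      using \<open>D x \<noteq> 0\<close> by simp
  qed
qed

lemma product_increment_bound:
  fixes f f' g W :: "real \<Rightarrow> real"
  assumes f: "(f' has_integral (f d - f c)) {c..d}"
    and W: "(g has_integral (W d - W c)) {c..d}"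
    and fg: "(\<lambda>t. f t * g t) integrable_on {c..d}" and f'W: "(\<lambda>t. f' t * W t) integrable_on {c..d}"
    and g_abs: "(\<lambda>t. \<bar>g t\<bar>) integrable_on {c..d}"
    and f_close: "\<And>t. t \<in> {c..d} \<Longrightarrow> \<bar>f t - f c\<bar> \<le> \<epsilon>"
    and W_close: "\<And>t. t \<in> {c..d} \<Longrightarrow> \<bar>W d - W t\<bar> \<le> \<epsilon>"
    and f'_bound: "\<And>t. t \<in> {c..d} \<Longrightarrow> \<bar>f' t\<bar> \<le> B"
    and "c \<le> d"
  shows "\<bar>f d * W d - f c * W c - integral {c..d} (\<lambda>t. f t * g t + f' t * W t)\<bar>
           \<le> \<epsilon> * integral {c..d} (\<lambda>t. \<bar>g t\<bar>) + B * \<epsilon> * (d - c)"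
proof -
  have "((\<lambda>t. (f c * g t + f' t * W d) - (f t * g t + f' t * W t)) has_integral
      (f c * (W d - W c) + (f d - f c) * W d - integral {c..d} (\<lambda>t. f t * g t + f' t * W t))) {c..d}"
    by (intro has_integral_diff has_integral_add has_integral_mult_right has_integral_mult_left
        W f integrable_integral integrable_add fg f'W)
  then have diff: "((\<lambda>t. (f c - f t) * g t + f' t * (W d - W t)) has_integral
      (f d * W d - f c * W c - integral {c..d} (\<lambda>t. f t * g t + f' t * W t))) {c..d}"
    by (simp add: algebra_simps)
  have majorant: "((\<lambda>t. \<epsilon> * \<bar>g t\<bar> + B * \<epsilon>) has_integral
      (\<epsilon> * integral {c..d} (\<lambda>t. \<bar>g t\<bar>) + B * \<epsilon> * (d - c))) {c..d}"
    using has_integral_const_real[of "B * \<epsilon>" c d] \<open>c \<le> d\<close>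
    by (intro has_integral_add has_integral_mult_right integrable_integral g_abs) (simp_all add: mult.commute)
  have "norm ((f c - f t) * g t + f' t * (W d - W t)) \<le> \<epsilon> * \<bar>g t\<bar> + B * \<epsilon>" if "t \<in> {c..d}" for t
  proof -
    have "\<bar>f c - f t\<bar> * \<bar>g t\<bar> \<le> \<epsilon> * \<bar>g t\<bar>"
      using f_close[OF that] by (intro mult_right_mono) (auto simp: abs_minus_commute)
    moreover have "\<bar>f' t\<bar> * \<bar>W d - W t\<bar> \<le> B * \<epsilon>"
      using f'_bound[OF that] W_close[OF that] by (intro mult_mono) auto
    moreover have "norm ((f c - f t) * g t + f' t * (W d - W t))
        \<le> \<bar>f c - f t\<bar> * \<bar>g t\<bar> + \<bar>f' t\<bar> * \<bar>W d - W t\<bar>"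
      using abs_triangle_ineq[of "(f c - f t) * g t" "f' t * (W d - W t)"] by (simp add: abs_mult)
    ultimately show ?thesis
      by linarith
  qed
  then have "norm (integral {c..d} (\<lambda>t. (f c - f t) * g t + f' t * (W d - W t)))
      \<le> integral {c..d} (\<lambda>t. \<epsilon> * \<bar>g t\<bar> + B * \<epsilon>)"
    using has_integral_integrable[OF diff] has_integral_integrable[OF majorant]
    by (intro integral_norm_bound_integral) auto
  then show ?thesis
    using integral_unique[OF diff] integral_unique[OF majorant] by simp
qed
lemma indefinite_integral_increment:
  fixes g W :: "real \<Rightarrow> real"
  assumes g: "g integrable_on {a..b}" and W: "\<And>t. t \<in> {a..b} \<Longrightarrow> (g has_integral (W t - W a)) {a..t}"
  shows "continuous_on {a..b} W"
    and "a \<le> c \<Longrightarrow> c \<le> d \<Longrightarrow> d \<le> b \<Longrightarrow> (g has_integral (W d - W c)) {c..d}"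
proof -
  have W_eq: "W t = W a + integral {a..t} g" if "t \<in> {a..b}" for t
    using W[OF that] by (simp add: integral_unique)
  show "continuous_on {a..b} W"
    using continuous_on_add[OF continuous_on_const indefinite_integral_continuous_1[OF g]]
    by (rule continuous_on_eq) (rule W_eq[symmetric])
  show "(g has_integral (W d - W c)) {c..d}" if "a \<le> c" "c \<le> d" "d \<le> b"
    using integral_combine_subinterval[OF g that] W_eq[of c] W_eq[of d] that
      integrable_subinterval_real[OF g, of c d]
    by (auto simp: has_integral_integral)
qed

lemma integration_by_parts_indefinite_integral:
  fixes f f' g W :: "real \<Rightarrow> real"
  assumes f: "\<And>t. t \<in> {a..b} \<Longrightarrow> (f has_real_derivative f' t) (at t within {a..b})"
    and f'_cont: "continuous_on {a..b} f'"
    and g: "g absolutely_integrable_on {a..b}"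
    and W: "\<And>t. t \<in> {a..b} \<Longrightarrow> (g has_integral (W t - W a)) {a..t}"
    and x: "x \<in> {a..b}"
  shows "((\<lambda>t. f t * g t + f' t * W t) has_integral (f x * W x - f a * W a)) {a..x}"
proof -
  have f_cont: "continuous_on {a..b} f"
    using f by (rule DERIV_continuous_on)
  have g_int: "g integrable_on {a..b}"
    using g by (rule set_lebesgue_integral_eq_integral(1))
  have g_abs: "(\<lambda>t. \<bar>g t\<bar>) integrable_on {a..b}"
    using g by (simp add: absolutely_integrable_on_def)
  have W_cont: "continuous_on {a..b} W"
    using g_int W by (rule indefinite_integral_increment(1))
  have fg_int: "(\<lambda>t. f t * g t) integrable_on {a..b}"
    using absolutely_integrable_mult_continuous[OF f_cont g]
    by (simp add: mult.commute set_lebesgue_integral_eq_integral(1))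
  have f'W_int: "(\<lambda>t. f' t * W t) integrable_on {a..b}"
    by (intro integrable_continuous_real continuous_intros f'_cont W_cont)
  have h_int: "(\<lambda>t. f t * g t + f' t * W t) integrable_on {a..b}"
    using fg_int f'W_int by (rule integrable_add)
  obtain B where "\<forall>y\<in>f' ` {a..b}. norm y \<le> B"
    using compact_imp_bounded[OF compact_continuous_image[OF f'_cont compact_Icc]]
    unfolding bounded_iff by blast
  then have B: "\<And>t. t \<in> {a..b} \<Longrightarrow> \<bar>f' t\<bar> \<le> B"
    by simp
  \<comment> \<open>the increments of \<open>D\<close> over short \<open>[c, d]\<close> are \<open>o(\<integral>\<^sub>c\<^sup>d \<bar>g\<bar> + (d - c))\<close>, so \<open>D\<close> vanishes\<close>
  define D where "D y = f y * W y - f a * W a - integral {a..y} (\<lambda>t. f t * g t + f' t * W t)" for y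
  have "D x = 0"
  proof (rule zero_if_small_increments[OF _ _ x])
    fix \<epsilon> :: real assume "\<epsilon> > 0"
    obtain \<delta>f where "\<delta>f > 0" and \<delta>f: "\<And>s t. s \<in> {a..b} \<Longrightarrow> t \<in> {a..b} \<Longrightarrow> dist t s < \<delta>f \<Longrightarrow> dist (f t) (f s) < \<epsilon>"
      using compact_uniformly_continuous[OF f_cont compact_Icc] \<open>\<epsilon> > 0\<close>
      unfolding uniformly_continuous_on_def by metis
    obtain \<delta>W where "\<delta>W > 0" and \<delta>W: "\<And>s t. s \<in> {a..b} \<Longrightarrow> t \<in> {a..b} \<Longrightarrow> dist t s < \<delta>W \<Longrightarrow> dist (W t) (W s) < \<epsilon>"
      using compact_uniformly_continuous[OF W_cont compact_Icc] \<open>\<epsilon> > 0\<close>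
      unfolding uniformly_continuous_on_def by metis
    have "\<bar>D d - D c\<bar> \<le> \<epsilon> * ((integral {a..d} (\<lambda>t. \<bar>g t\<bar>) + B * d) - (integral {a..c} (\<lambda>t. \<bar>g t\<bar>) + B * c))"
      if cd: "a \<le> c" "c \<le> d" "d \<le> b" "d - c < min \<delta>f \<delta>W" for c d
    proof -
      have sub: "{c..d} \<subseteq> {a..b}"
        using cd by auto
      have "(f' has_integral (f d - f c)) {c..d}"
        using cd by (intro fundamental_theorem_of_calculus)
          (auto simp flip: has_real_derivative_iff_has_vector_derivative intro: DERIV_subset[OF f])
      moreover have "(g has_integral (W d - W c)) {c..d}"
        using g_int W cd(1-3) by (rule indefinite_integral_increment(2))
      moreover have "\<bar>f t - f c\<bar> \<le> \<epsilon>" "\<bar>W d - W t\<bar> \<le> \<epsilon>" "\<bar>f' t\<bar> \<le> B" if "t \<in> {c..d}" for t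
        using \<delta>f[of c t] \<delta>W[of t d] B[of t] that cd by (auto simp: dist_real_def)
      ultimately have "\<bar>f d * W d - f c * W c - integral {c..d} (\<lambda>t. f t * g t + f' t * W t)\<bar>
          \<le> \<epsilon> * integral {c..d} (\<lambda>t. \<bar>g t\<bar>) + B * \<epsilon> * (d - c)"
        using cd integrable_subinterval_real[OF fg_int sub] integrable_subinterval_real[OF f'W_int sub]
          integrable_subinterval_real[OF g_abs sub]
        by (intro product_increment_bound) auto
      then show ?thesis
        using integral_combine_subinterval[OF h_int cd(1-3)] integral_combine_subinterval[OF g_abs cd(1-3)]
        by (simp add: D_def algebra_simps)
    qed
    then show "\<exists>\<delta>>0. \<forall>c d. a \<le> c \<and> c \<le> d \<and> d \<le> b \<and> d - c < \<delta> \<longrightarrow>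
        \<bar>D d - D c\<bar> \<le> \<epsilon> * ((integral {a..d} (\<lambda>t. \<bar>g t\<bar>) + B * d) - (integral {a..c} (\<lambda>t. \<bar>g t\<bar>) + B * c))"
      using \<open>\<delta>f > 0\<close> \<open>\<delta>W > 0\<close> by (intro exI[of _ "min \<delta>f \<delta>W"]) auto
  qed (simp add: D_def)
  then show ?thesis
    using integrable_subinterval_real[OF h_int, of a x] x by (simp add: D_def has_integral_integral)
qed

lemma integral_pos_if_continuous_nonneg:
  fixes f :: "real \<Rightarrow> real"
  assumes "a < b" and f_cont: "continuous_on {a..b} f" and nonneg: "\<And>t. t \<in> {a..b} \<Longrightarrow> 0 \<le> f t"
    and "x \<in> {a..b}" "f x \<noteq> 0"
  shows "integral {a..b} f > 0"
proof -
  have "integral {a..b} f \<noteq> 0"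
    using integral_cbox_eq_0_iff[of a b f] assms by auto
  moreover have "0 \<le> integral {a..b} f"
    using nonneg by (intro integral_nonneg integrable_continuous_real f_cont) auto
  ultimately show ?thesis
    by simp
qed

lemma isCont_if_lipschitz_at:
  fixes f :: "real \<Rightarrow> real"
  assumes "\<And>y. \<bar>y - x\<bar> \<le> 1 \<Longrightarrow> \<bar>f y - f x\<bar> \<le> C * \<bar>y - x\<bar>"
  shows "isCont f x"
proof -
  have "eventually (\<lambda>y. y \<in> ball x 1) (at x)"
    by (intro eventually_at_in_open') auto
  then have "eventually (\<lambda>y. norm (f y - f x) \<le> C * \<bar>y - x\<bar>) (at x)"
    by eventually_elim (auto simp: dist_real_def intro: assms)
  moreover have "((\<lambda>y. C * \<bar>y - x\<bar>) \<longlongrightarrow> 0) (at x)"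
    by (intro tendsto_eq_intros) auto
  ultimately have "((\<lambda>y. f y - f x) \<longlongrightarrow> 0) (at x)"
    by (rule Lim_null_comparison)
  then show ?thesis
    unfolding isCont_def by (simp add: LIM_zero_iff)
qed

lemma integral_mult_nonneg_AE:
  fixes q h :: "real \<Rightarrow> real"
  assumes "AE x in lborel. x \<in> {a..b} \<longrightarrow> 0 \<le> q x" and q_int: "q absolutely_integrable_on {a..b}"
    and h_cont: "continuous_on {a..b} h" and "\<And>x. x \<in> {a..b} \<Longrightarrow> 0 \<le> h x"
  shows "0 \<le> integral {a..b} (\<lambda>t. q t * h t)"
proof -
  have qh: "(\<lambda>t. q t * h t) absolutely_integrable_on {a..b}"
    by (rule absolutely_integrable_mult_continuous[OF h_cont q_int])
  have "0 \<le> set_lebesgue_integral lebesgue {a..b} (\<lambda>t. q t * h t)"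
    unfolding set_lebesgue_integral_def
    using AE_completion[OF assms(1)] assms(4)
    by (intro integral_nonneg_AE) (auto elim!: eventually_mono simp: indicator_def)
  then show ?thesis
    using set_lebesgue_integral_eq_integral(2)[OF qh] by simp
qed

lemma filterlim_at_bot_at_left_if_decreasing:
  fixes f :: "real \<Rightarrow> real"
  assumes dec: "\<And>x y. c < x \<Longrightarrow> x < y \<Longrightarrow> y < p \<Longrightarrow> f y < f x" and "c < p"
    and unbounded: "filterlim f at_infinity (at_left p)"
  shows "filterlim f at_bot (at_left p)"
  unfolding filterlim_at_bot
proof
  fix Z :: real
  define m where "m = (c + p) / 2"
  have m: "c < m" "m < p"
    using \<open>c < p\<close> by (auto simp: m_def)
  have "eventually (\<lambda>x. \<bar>Z\<bar> + \<bar>f m\<bar> + 1 \<le> norm (f x)) (at_left p)"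
    using unbounded unfolding filterlim_at_infinity[OF order_refl] by auto
  moreover have "eventually (\<lambda>x. x \<in> {m<..<p}) (at_left p)"
    using eventually_at_left_real[OF m(2)] .
  ultimately show "eventually (\<lambda>x. f x \<le> Z) (at_left p)"
  proof eventually_elim
    case (elim x)
    then show ?case
      using dec[of m x] m by auto
  qed
qed

lemma filterlim_at_top_at_right_if_decreasing:
  fixes f :: "real \<Rightarrow> real"
  assumes dec: "\<And>x y. p < x \<Longrightarrow> x < y \<Longrightarrow> y < c \<Longrightarrow> f y < f x" and "p < c"
    and unbounded: "filterlim f at_infinity (at_right p)"
  shows "filterlim f at_top (at_right p)"
  unfolding filterlim_at_top
proof
  fix Z :: real
  define m where "m = (p + c) / 2"
  have m: "p < m" "m < c"
    using \<open>p < c\<close> by (auto simp: m_def)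
  have "eventually (\<lambda>x. \<bar>Z\<bar> + \<bar>f m\<bar> + 1 \<le> norm (f x)) (at_right p)"
    using unbounded unfolding filterlim_at_infinity[OF order_refl] by auto
  moreover have "eventually (\<lambda>x. x \<in> {p<..<m}) (at_right p)"
    using eventually_at_right_real[OF m(1)] .
  ultimately show "eventually (\<lambda>x. Z \<le> f x) (at_right p)"
  proof eventually_elim
    case (elim x)
    then show ?case
      using dec[of x m] m by auto
  qed
qed

lemma filterlim_at_top_add_at_top_or_tendsto:
  fixes f g :: "'a \<Rightarrow> real"
  assumes "filterlim f at_top F \<or> (\<exists>c. (f \<longlongrightarrow> c) F)" "filterlim g at_top F \<or> (\<exists>c. (g \<longlongrightarrow> c) F)"
    and "filterlim f at_top F \<or> filterlim g at_top F"
  shows "filterlim (\<lambda>x. f x + g x) at_top F"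
  using assms
  by (auto intro: filterlim_at_top_add_at_top filterlim_tendsto_add_at_top
      simp: filterlim_tendsto_add_at_top[of g _ F f, simplified add.commute])

lemma filterlim_at_bot_add_at_bot_or_tendsto:
  fixes f g :: "'a \<Rightarrow> real"
  assumes "filterlim f at_bot F \<or> (\<exists>c. (f \<longlongrightarrow> c) F)" "filterlim g at_bot F \<or> (\<exists>c. (g \<longlongrightarrow> c) F)"
    and "filterlim f at_bot F \<or> filterlim g at_bot F"
  shows "filterlim (\<lambda>x. f x + g x) at_bot F"
proof -
  have "filterlim (\<lambda>x. - f x + - g x) at_top F"
    using assms by (intro filterlim_at_top_add_at_top_or_tendsto)
      (auto simp: filterlim_uminus_at_top intro: tendsto_minus)
  then show ?thesis
    by (simp add: filterlim_uminus_at_top add.commute)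
qed

lemma mono_seq_ge_first:
  fixes \<mu> :: "nat \<Rightarrow> real"
  assumes mono: "\<And>n. n \<ge> 1 \<Longrightarrow> \<mu> n \<le> \<mu> (Suc n)" and "1 \<le> i" "i \<le> j"
  shows "\<mu> i \<le> \<mu> j"
  using assms(3,2)
proof (induction j rule: dec_induct)
  case (step n)
  then show ?case
    using mono[of n] by simp
qed simp

lemma mono_seq_ge_Suc_if_less:
  fixes \<mu> :: "nat \<Rightarrow> real"
  assumes "\<And>n. n \<ge> 1 \<Longrightarrow> \<mu> n \<le> \<mu> (Suc n)" and "n \<ge> 1" "k \<ge> 1" and "\<mu> n < \<mu> k"
  shows "\<mu> (Suc n) \<le> \<mu> k"
proof -
  have "n < k"
    using mono_seq_ge_first[where \<mu>=\<mu>, OF assms(1), of k n] assms(3,4) by (cases "k \<le> n") auto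
  then show ?thesis
    using mono_seq_ge_first[where \<mu>=\<mu>, OF assms(1), of "Suc n" k] assms(2) by simp
qed

lemma continuous_on_reflect_real:
  fixes f :: "real \<Rightarrow> 'a::topological_space"
  shows "continuous_on {a..b} f \<Longrightarrow> continuous_on {-b..-a} (\<lambda>x. f (-x))"
  by (rule continuous_on_compose2[of "{a..b}"]) (auto intro: continuous_intros)

lemma uniformly_positive_on_reflect:
  "uniformly_positive_on {a..b} f \<Longrightarrow> uniformly_positive_on {-b..-a} (\<lambda>x. f (-x))"
  unfolding uniformly_positive_on_def by (metis atLeastAtMost_iff minus_le_iff neg_le_iff_le)

lemma H2_on_imp_continuous_on: "H2_on a b f \<Longrightarrow> continuous_on {a..b} f"
  unfolding H2_on_def using DERIV_continuous_on by blast

lemma integral_mult_nonneg_AE_reflect: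
  fixes q h :: "real \<Rightarrow> real"
  assumes "AE x in lborel. x \<in> {a..b} \<longrightarrow> 0 \<le> q x" and "q absolutely_integrable_on {a..b}"
    and h_cont: "continuous_on {-b..-a} h" and h_nonneg: "\<And>x. x \<in> {-b..-a} \<Longrightarrow> 0 \<le> h x"
  shows "0 \<le> integral {-b..-a} (\<lambda>t. q (-t) * h t)"
proof -
  have "0 \<le> integral {a..b} (\<lambda>t. q t * h (-t))"
    using continuous_on_reflect_real[OF h_cont] h_nonneg
    by (intro integral_mult_nonneg_AE[OF assms(1,2)]) auto
  then show ?thesis
    using Henstock_Kurzweil_Integration.integral_reflect_real[of b a "\<lambda>t. q t * h (-t)"] by simp
qed

section \<open>Solutions of the Sturm--Liouville equation\<close>

locale sl_coefficients =
  fixes a b :: real and \<sigma> q \<rho> :: "real \<Rightarrow> real" and s :: real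
  assumes a_less_b: "a < b"
    and \<sigma>_cont: "continuous_on {a..b} \<sigma>" and \<rho>_cont: "continuous_on {a..b} \<rho>"
    and s_pos: "s > 0" and \<sigma>_ge: "\<And>x. x \<in> {a..b} \<Longrightarrow> s \<le> \<sigma> x"
    and q_int: "q absolutely_integrable_on {a..b}"
begin

lemma \<rho>_abs_int: "\<rho> absolutely_integrable_on {a..b}"
  using absolutely_integrable_continuous_real[OF \<rho>_cont] .

lemma potential_abs_int: "(\<lambda>t. q t - l * \<rho> t) absolutely_integrable_on {a..b}"
  using set_integral_diff(1)[OF q_int set_integrable_mult_right[OF \<rho>_abs_int, of l]] .

lemma
  assumes S: "sl_solution \<sigma> q \<rho> a b l y y'"
  shows solution_deriv: "\<And>x. x \<in> {a..b} \<Longrightarrow> (y has_real_derivative y' x) (at x within {a..b})"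
    and solution_cont: "continuous_on {a..b} y"
    and solution_rhs_abs_int: "(\<lambda>t. (q t - l * \<rho> t) * y t) absolutely_integrable_on {a..b}"
    and quasi_derivative_eq:
      "\<And>x. x \<in> {a..b} \<Longrightarrow> \<sigma> x * y' x = \<sigma> a * y' a + integral {a..x} (\<lambda>t. (q t - l * \<rho> t) * y t)"
    and quasi_derivative_cont: "continuous_on {a..b} (\<lambda>x. \<sigma> x * y' x)"
    and solution_deriv_cont: "continuous_on {a..b} y'"
    and solution_eq_integral: "\<And>x. x \<in> {a..b} \<Longrightarrow> y x = y a + integral {a..x} y'"
proof -
  show deriv: "(y has_real_derivative y' x) (at x within {a..b})" if "x \<in> {a..b}" for x
    using S that unfolding sl_solution_def by blast
  show y_cont: "continuous_on {a..b} y"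
    using deriv by (rule DERIV_continuous_on)
  show rhs: "(\<lambda>t. (q t - l * \<rho> t) * y t) absolutely_integrable_on {a..b}"
    using absolutely_integrable_mult_continuous[OF y_cont potential_abs_int] .
  show "\<sigma> x * y' x = \<sigma> a * y' a + integral {a..x} (\<lambda>t. (q t - l * \<rho> t) * y t)"
    if "x \<in> {a..b}" for x
  proof -
    have "((\<lambda>t. (q t - l * \<rho> t) * y t) has_integral (\<sigma> x * y' x - \<sigma> a * y' a)) {a..x}"
      using S that unfolding sl_solution_def by blast
    then show ?thesis
      by (simp add: integral_unique)
  qed
  show quasi_cont: "continuous_on {a..b} (\<lambda>x. \<sigma> x * y' x)"
    using set_lebesgue_integral_eq_integral(1)[OF rhs]
    by (rule indefinite_integral_increment(1)[where W="\<lambda>x. \<sigma> x * y' x"])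
      (use S in \<open>simp add: sl_solution_def\<close>)
  have "continuous_on {a..b} (\<lambda>x. (\<sigma> x * y' x) / \<sigma> x)"
    using quasi_cont \<sigma>_cont by (rule continuous_on_divide) (use \<sigma>_ge s_pos in force)
  then show "continuous_on {a..b} y'"
    by (rule continuous_on_eq) (use \<sigma>_ge s_pos in force)
  show "y x = y a + integral {a..x} y'" if x: "x \<in> {a..b}" for x
  proof -
    have "(y' has_integral (y x - y a)) {a..x}"
      using x by (intro fundamental_theorem_of_calculus)
        (auto simp flip: has_real_derivative_iff_has_vector_derivative intro: DERIV_subset[OF deriv])
    then show ?thesis
      by (simp add: integral_unique)
  qed
qed

definition solution_distance ::
    "(real \<Rightarrow> real) \<Rightarrow> (real \<Rightarrow> real) \<Rightarrow> (real \<Rightarrow> real) \<Rightarrow> (real \<Rightarrow> real) \<Rightarrow> real \<Rightarrow> real" where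
  "solution_distance y1 y1' y2 y2' t = \<bar>y2 t - y1 t\<bar> + \<bar>\<sigma> t * y2' t - \<sigma> t * y1' t\<bar>"

lemma solution_distance_cont:
  assumes "sl_solution \<sigma> q \<rho> a b l1 y1 y1'" "sl_solution \<sigma> q \<rho> a b l2 y2 y2'"
  shows "continuous_on {a..b} (solution_distance y1 y1' y2 y2')"
  unfolding solution_distance_def[abs_def]
  by (intro continuous_on_add continuous_on_rabs continuous_on_diff solution_cont[OF assms(1)]
      solution_cont[OF assms(2)] quasi_derivative_cont[OF assms(1)] quasi_derivative_cont[OF assms(2)])

lemma solution_value_increment:
  assumes S1: "sl_solution \<sigma> q \<rho> a b l1 y1 y1'" and S2: "sl_solution \<sigma> q \<rho> a b l2 y2 y2'"
    and x: "x \<in> {a..b}"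
  shows "\<bar>(y2 x - y1 x) - (y2 a - y1 a)\<bar>
           \<le> integral {a..x} (\<lambda>t. solution_distance y1 y1' y2 y2' t / s)"
proof -
  have sub: "{a..x} \<subseteq> {a..b}"
    using x by auto
  have int1: "y1' integrable_on {a..x}" and int2: "y2' integrable_on {a..x}"
    using integrable_subinterval_real[OF integrable_continuous_real sub]
      solution_deriv_cont[OF S1] solution_deriv_cont[OF S2] by blast+
  have "(y2 x - y1 x) - (y2 a - y1 a) = integral {a..x} (\<lambda>t. y2' t - y1' t)"
    using solution_eq_integral[OF S1 x] solution_eq_integral[OF S2 x] integral_diff[OF int2 int1] by simp
  also have "\<bar>\<dots>\<bar> \<le> integral {a..x} (\<lambda>t. solution_distance y1 y1' y2 y2' t / s)"
  proof (rule integral_norm_bound_integral[where 'a=real, unfolded real_norm_def])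
    show "(\<lambda>t. y2' t - y1' t) integrable_on {a..x}"
      using int1 int2 by (rule integrable_diff[rotated])
    show "(\<lambda>t. solution_distance y1 y1' y2 y2' t / s) integrable_on {a..x}"
      using solution_distance_cont[OF S1 S2] sub
      by (intro integrable_continuous_real continuous_on_divide continuous_on_const)
        (use s_pos in \<open>auto intro: continuous_on_subset\<close>)
    fix t assume "t \<in> {a..x}"
    then have "s \<le> \<sigma> t"
      using sub by (intro \<sigma>_ge) auto
    then have "s * \<bar>y2' t - y1' t\<bar> \<le> \<bar>\<sigma> t * y2' t - \<sigma> t * y1' t\<bar>"
      using s_pos by (simp add: abs_mult mult_right_mono flip: right_diff_distrib)
    then show "\<bar>y2' t - y1' t\<bar> \<le> solution_distance y1 y1' y2 y2' t / s"
      using s_pos by (simp add: solution_distance_def field_simps)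
  qed
  finally show ?thesis .
qed

lemma weighted_distance_integrable:
  assumes "sl_solution \<sigma> q \<rho> a b l1 y1 y1'" "sl_solution \<sigma> q \<rho> a b l2 y2 y2'" "x \<in> {a..b}"
  shows "(\<lambda>t. (\<bar>q t\<bar> + \<Lambda> * \<bar>\<rho> t\<bar>) * solution_distance y1 y1' y2 y2' t) integrable_on {a..x}"
proof -
  have "(\<lambda>t. \<bar>q t\<bar> + \<Lambda> * \<bar>\<rho> t\<bar>) absolutely_integrable_on {a..b}"
    using set_integral_add(1)[OF absolutely_integrable_norm[OF q_int]
        set_integrable_mult_right[OF absolutely_integrable_norm[OF \<rho>_abs_int], of \<Lambda>]]
    by (simp add: o_def)
  from absolutely_integrable_mult_continuous[OF solution_distance_cont[OF assms(1,2)] this]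
  show ?thesis
    using assms(3) by (auto intro: integrable_subinterval_real set_lebesgue_integral_eq_integral(1))
qed

lemma quasi_derivative_increment:
  assumes S1: "sl_solution \<sigma> q \<rho> a b l1 y1 y1'" and S2: "sl_solution \<sigma> q \<rho> a b l2 y2 y2'"
    and \<Lambda>: "\<bar>l2\<bar> \<le> \<Lambda>" and x: "x \<in> {a..b}"
  shows "\<bar>(\<sigma> x * y2' x - \<sigma> x * y1' x) - (\<sigma> a * y2' a - \<sigma> a * y1' a)\<bar>
           \<le> integral {a..x} (\<lambda>t. (\<bar>q t\<bar> + \<Lambda> * \<bar>\<rho> t\<bar>) * solution_distance y1 y1' y2 y2' t)
             + \<bar>l1 - l2\<bar> * integral {a..b} (\<lambda>t. \<bar>\<rho> t\<bar> * \<bar>y1 t\<bar>)"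
proof -
  define g1 where "g1 t = (q t - l1 * \<rho> t) * y1 t" for t
  define g2 where "g2 t = (q t - l2 * \<rho> t) * y2 t" for t
  define k where "k t = \<bar>q t\<bar> + \<Lambda> * \<bar>\<rho> t\<bar>" for t
  define E where "E = solution_distance y1 y1' y2 y2'"
  define c where "c = \<bar>l1 - l2\<bar>"
  have sub: "{a..x} \<subseteq> {a..b}"
    using x by auto
  have g1_int: "g1 integrable_on {a..x}" and g2_int: "g2 integrable_on {a..x}"
    unfolding g1_def[abs_def] g2_def[abs_def]
    using solution_rhs_abs_int[OF S1] solution_rhs_abs_int[OF S2]
    by (auto intro: integrable_subinterval_real[OF _ sub] set_lebesgue_integral_eq_integral(1))
  have kE_int: "(\<lambda>t. k t * E t) integrable_on {a..x}"
    unfolding k_def E_def by (rule weighted_distance_integrable[OF S1 S2 x])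
  have \<rho>y_cont: "continuous_on {a..b} (\<lambda>t. \<bar>\<rho> t\<bar> * \<bar>y1 t\<bar>)"
    by (intro continuous_on_mult continuous_on_rabs \<rho>_cont solution_cont[OF S1])
  have \<rho>y_int: "(\<lambda>t. c * (\<bar>\<rho> t\<bar> * \<bar>y1 t\<bar>)) integrable_on {a..x}"
    using \<rho>y_cont sub
    by (intro integrable_on_mult_right integrable_continuous_real) (auto intro: continuous_on_subset)
  have "(\<sigma> x * y2' x - \<sigma> x * y1' x) - (\<sigma> a * y2' a - \<sigma> a * y1' a) = integral {a..x} (\<lambda>t. g2 t - g1 t)"
    using quasi_derivative_eq[OF S1 x] quasi_derivative_eq[OF S2 x] integral_diff[OF g2_int g1_int]
    unfolding g1_def g2_def by simp
  also have "\<bar>\<dots>\<bar> \<le> integral {a..x} (\<lambda>t. k t * E t + c * (\<bar>\<rho> t\<bar> * \<bar>y1 t\<bar>))"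
  proof (rule integral_norm_bound_integral[where 'a=real, unfolded real_norm_def])
    show "(\<lambda>t. g2 t - g1 t) integrable_on {a..x}"
      using g2_int g1_int by (rule integrable_diff)
    show "(\<lambda>t. k t * E t + c * (\<bar>\<rho> t\<bar> * \<bar>y1 t\<bar>)) integrable_on {a..x}"
      using kE_int \<rho>y_int by (rule integrable_add)
    fix t
    have "\<bar>q t - l2 * \<rho> t\<bar> \<le> k t"
      using \<Lambda> abs_triangle_ineq4[of "q t" "l2 * \<rho> t"]
        mult_right_mono[OF \<Lambda> abs_ge_zero[of "\<rho> t"]]
      by (simp add: k_def abs_mult)
    then have "\<bar>(q t - l2 * \<rho> t) * (y2 t - y1 t)\<bar> \<le> k t * E t"
      unfolding abs_mult E_def solution_distance_def
      by (intro mult_mono) auto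
    moreover have "g2 t - g1 t = (q t - l2 * \<rho> t) * (y2 t - y1 t) + (l1 - l2) * (\<rho> t * y1 t)"
      by (simp add: g1_def g2_def algebra_simps)
    ultimately show "\<bar>g2 t - g1 t\<bar> \<le> k t * E t + c * (\<bar>\<rho> t\<bar> * \<bar>y1 t\<bar>)"
      using abs_triangle_ineq[of "(q t - l2 * \<rho> t) * (y2 t - y1 t)" "(l1 - l2) * (\<rho> t * y1 t)"]
      by (simp add: c_def abs_mult)
  qed
  also have "\<dots> = integral {a..x} (\<lambda>t. k t * E t) + c * integral {a..x} (\<lambda>t. \<bar>\<rho> t\<bar> * \<bar>y1 t\<bar>)"
    using integral_add[OF kE_int \<rho>y_int] by simp
  also have "\<dots> \<le> integral {a..x} (\<lambda>t. k t * E t) + c * integral {a..b} (\<lambda>t. \<bar>\<rho> t\<bar> * \<bar>y1 t\<bar>)"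
    using integral_combine_subinterval[OF integrable_continuous_real[OF \<rho>y_cont], of x b]
      integral_nonneg_subinterval[OF integrable_continuous_real[OF \<rho>y_cont], of x b] x
    by (auto simp: c_def intro!: mult_left_mono)
  finally show ?thesis
    by (simp add: k_def E_def c_def)
qed

lemma continuous_dependence:
  assumes S1: "sl_solution \<sigma> q \<rho> a b l1 y1 y1'" and S2: "sl_solution \<sigma> q \<rho> a b l2 y2 y2'"
    and \<Lambda>: "\<bar>l2\<bar> \<le> \<Lambda>" and x: "x \<in> {a..b}"
  shows "solution_distance y1 y1' y2 y2' x
           \<le> (solution_distance y1 y1' y2 y2' a + \<bar>l1 - l2\<bar> * integral {a..b} (\<lambda>t. \<bar>\<rho> t\<bar> * \<bar>y1 t\<bar>))
             * exp (2 * integral {a..b} (\<lambda>t. 1/s + \<bar>q t\<bar> + \<Lambda> * \<bar>\<rho> t\<bar>))"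
proof (rule gronwall_integral[OF solution_distance_cont[OF S1 S2] _ _ _ _ x])
  define E where "E = solution_distance y1 y1' y2 y2'"
  show "(\<lambda>t. 1/s + \<bar>q t\<bar> + \<Lambda> * \<bar>\<rho> t\<bar>) absolutely_integrable_on {a..b}"
    using set_integral_add(1)[OF set_integral_add(1)[OF absolutely_integrable_continuous_real
          absolutely_integrable_norm[OF q_int]]
        set_integrable_mult_right[OF absolutely_integrable_norm[OF \<rho>_abs_int], of \<Lambda>]]
    by (simp add: o_def)
  show "0 \<le> 1/s + \<bar>q t\<bar> + \<Lambda> * \<bar>\<rho> t\<bar>" for t
    using s_pos \<Lambda> by (simp add: add_nonneg_nonneg)
  show "0 \<le> E t" for t
    by (simp add: E_def solution_distance_def)
  fix y assume y: "y \<in> {a..b}"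
  have "integral {a..y} (\<lambda>t. (1/s + \<bar>q t\<bar> + \<Lambda> * \<bar>\<rho> t\<bar>) * E t)
      = integral {a..y} (\<lambda>t. E t / s) + integral {a..y} (\<lambda>t. (\<bar>q t\<bar> + \<Lambda> * \<bar>\<rho> t\<bar>) * E t)"
  proof -
    have "(\<lambda>t. E t / s) integrable_on {a..y}"
      using solution_distance_cont[OF S1 S2] y unfolding E_def
      by (intro integrable_continuous_real continuous_on_divide continuous_on_const)
        (use s_pos in \<open>auto intro: continuous_on_subset\<close>)
    from integral_add[OF this weighted_distance_integrable[OF S1 S2 y, of \<Lambda>]]
    show ?thesis
      unfolding E_def by (simp add: distrib_right add.assoc)
  qed
  then show "E y \<le> solution_distance y1 y1' y2 y2' a + \<bar>l1 - l2\<bar> * integral {a..b} (\<lambda>t. \<bar>\<rho> t\<bar> * \<bar>y1 t\<bar>)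
      + integral {a..y} (\<lambda>t. (1/s + \<bar>q t\<bar> + \<Lambda> * \<bar>\<rho> t\<bar>) * E t)"
    using solution_value_increment[OF S1 S2 y] quasi_derivative_increment[OF S1 S2 \<Lambda> y]
    unfolding E_def solution_distance_def by linarith
qed

lemma solution_unique:
  assumes S1: "sl_solution \<sigma> q \<rho> a b l y1 y1'" and S2: "sl_solution \<sigma> q \<rho> a b l y2 y2'"
    and "y1 a = y2 a" "y1' a = y2' a" and x: "x \<in> {a..b}"
  shows "y2 x = y1 x" "y2' x = y1' x"
proof -
  have "solution_distance y1 y1' y2 y2' x \<le> 0"
    using continuous_dependence[OF S1 S2 order_refl x] assms(3,4) by (simp add: solution_distance_def)
  then have "y2 x = y1 x" "\<sigma> x * (y2' x - y1' x) = 0"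
    unfolding solution_distance_def right_diff_distrib
    using abs_ge_zero[of "y2 x - y1 x"] abs_ge_zero[of "\<sigma> x * y2' x - \<sigma> x * y1' x"] by linarith+
  moreover have "\<sigma> x \<noteq> 0"
    using \<sigma>_ge[OF x] s_pos by auto
  ultimately show "y2 x = y1 x" "y2' x = y1' x"
    by auto
qed

lemma reflect: "sl_coefficients (-b) (-a) (\<lambda>x. \<sigma> (-x)) (\<lambda>x. q (-x)) (\<lambda>x. \<rho> (-x)) s"
  using a_less_b continuous_on_reflect_real[OF \<sigma>_cont] continuous_on_reflect_real[OF \<rho>_cont]
    s_pos \<sigma>_ge q_int
  by unfold_locales auto

end

lemma sl_solution_scale:
  assumes "sl_solution \<sigma> q \<rho> a b l y y'"
  shows "sl_solution \<sigma> q \<rho> a b l (\<lambda>x. c * y x) (\<lambda>x. c * y' x)"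
  using assms unfolding sl_solution_def
proof (intro conjI ballI; elim conjE)
  fix x assume x: "x \<in> {a..b}"
    and "\<forall>x\<in>{a..b}. (y has_real_derivative y' x) (at x within {a..b})"
    and int: "\<forall>x\<in>{a..b}. ((\<lambda>t. (q t - l * \<rho> t) * y t) has_integral \<sigma> x * y' x - \<sigma> a * y' a) {a..x}"
  then show "((\<lambda>x. c * y x) has_real_derivative c * y' x) (at x within {a..b})"
    by (intro DERIV_cmult) auto
  from has_integral_mult_right[OF int[rule_format, OF x], of c]
  show "((\<lambda>t. (q t - l * \<rho> t) * (c * y t)) has_integral \<sigma> x * (c * y' x) - \<sigma> a * (c * y' a)) {a..x}"
    by (simp add: algebra_simps)
qed

lemma sl_solution_zero: "sl_solution \<sigma> q \<rho> a b l (\<lambda>x. 0) (\<lambda>x. 0)"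
  unfolding sl_solution_def by auto

lemma sl_solution_reflect:
  assumes S: "sl_solution \<sigma> q \<rho> a b l y y'"
  shows "sl_solution (\<lambda>x. \<sigma> (-x)) (\<lambda>x. q (-x)) (\<lambda>x. \<rho> (-x)) (-b) (-a) l (\<lambda>x. y (-x)) (\<lambda>x. - y' (-x))"
  unfolding sl_solution_def
proof (intro conjI ballI)
  define g where "g t = (q t - l * \<rho> t) * y t" for t
  have deriv: "\<And>x. x \<in> {a..b} \<Longrightarrow> (y has_real_derivative y' x) (at x within {a..b})"
    and int: "\<And>x. x \<in> {a..b} \<Longrightarrow> (g has_integral (\<sigma> x * y' x - \<sigma> a * y' a)) {a..x}"
    using S unfolding sl_solution_def g_def[abs_def] by auto
  fix x assume x: "x \<in> {-b..-a}"
  have "(y has_vector_derivative y' (-x)) (at (-x) within uminus ` {-b..-a})"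
    using deriv[of "-x"] x by (simp add: has_real_derivative_iff_has_vector_derivative)
  then have "((y \<circ> uminus) has_vector_derivative ((-1) *\<^sub>R y' (-x))) (at x within {-b..-a})"
    by (intro vector_diff_chain_within) (auto intro!: derivative_eq_intros)
  then show "((\<lambda>x. y (-x)) has_real_derivative - y' (-x)) (at x within {-b..-a})"
    by (simp add: has_real_derivative_iff_has_vector_derivative o_def)
  have x': "-x \<in> {a..b}"
    using x by auto
  have "(g has_integral integral {-x..b} g) {-x..b}"
    using x' by (intro integrable_integral integrable_subinterval_real[OF has_integral_integrable[OF int[of b]]]) auto
  moreover from has_integral_unique[OF has_integral_combine[OF _ _ int[OF x'] this] int[of b]]
  have "integral {-x..b} g = \<sigma> b * y' b - \<sigma> (-x) * y' (-x)"
    using x' by simp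
  ultimately have "(g has_integral (\<sigma> b * y' b - \<sigma> (-x) * y' (-x))) {-x..b}"
    by simp
  then have "((\<lambda>t. g (-t)) has_integral (\<sigma> b * y' b - \<sigma> (-x) * y' (-x))) {-b..-(-x)}"
    by (simp only: has_integral_reflect_real)
  then show "((\<lambda>t. (q (-t) - l * \<rho> (-t)) * y (-t)) has_integral
      \<sigma> (-x) * - y' (-x) - \<sigma> (- (-b)) * - y' (- (-b))) {-b..x}"
    by (simp add: g_def)
qed

lemma dirichlet_eigenvalue_reflect:
  "dirichlet_eigenvalue (\<lambda>x. \<sigma> (-x)) (\<lambda>x. q (-x)) (\<lambda>x. \<rho> (-x)) (-b) (-a) l \<longleftrightarrow>
   dirichlet_eigenvalue \<sigma> q \<rho> a b l"
proof -
  have reflected: "dirichlet_eigenvalue (\<lambda>x. \<sigma> (-x)) (\<lambda>x. q (-x)) (\<lambda>x. \<rho> (-x)) (-b) (-a) l"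
    if ev: "dirichlet_eigenvalue \<sigma> q \<rho> a b l" for \<sigma> q \<rho> :: "real \<Rightarrow> real" and a b
  proof -
    obtain y y' x where "sl_solution \<sigma> q \<rho> a b l y y'" "y a = 0" "y b = 0" "x \<in> {a..b}" "y x \<noteq> 0"
      using ev unfolding dirichlet_eigenvalue_def by blast
    then show ?thesis
      unfolding dirichlet_eigenvalue_def
      by (intro exI[of _ "\<lambda>x. y (-x)"] exI[of _ "\<lambda>x. - y' (-x)"] conjI sl_solution_reflect bexI[of _ "-x"]) auto
  qed
  show ?thesis
    using reflected reflected[of "\<lambda>x. \<sigma> (-x)" "\<lambda>x. q (-x)" "\<lambda>x. \<rho> (-x)" "-b" "-a"] by auto
qed

section \<open>The Weyl function of the Dirichlet shooting solution\<close>

text \<open>The sign condition on \<open>q\<close> is assumed in the weak form \<open>0 \<le> \<integral> q h\<close> for continuous \<open>h \<ge> 0\<close>,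
  which, unlike the almost-everywhere form, transfers directly under reflection of the interval.\<close>

locale dirichlet_shooting = sl_coefficients +
  fixes u u' :: "real \<Rightarrow> real \<Rightarrow> real" and r :: real
  assumes r_pos: "r > 0" and \<rho>_ge: "\<And>x. x \<in> {a..b} \<Longrightarrow> r \<le> \<rho> x"
    and q_nonneg: "\<And>h. continuous_on {a..b} h \<Longrightarrow> (\<And>x. x \<in> {a..b} \<Longrightarrow> 0 \<le> h x) \<Longrightarrow>
                     0 \<le> integral {a..b} (\<lambda>t. q t * h t)"
    and u_solution: "\<And>l. sl_solution \<sigma> q \<rho> a b l (u l) (u' l)"
    and u_start: "\<And>l. u l a = 0" and u'_start: "\<And>l. u' l a = 1"
begin

lemma u_not_identically_zero: "\<exists>x\<in>{a..b}. u l x \<noteq> 0"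
proof (rule ccontr)
  assume "\<not> ?thesis"
  then have "((\<lambda>x. 0) has_vector_derivative u' l a) (at a within {a..b})"
    using solution_deriv[OF u_solution, of a l] a_less_b
    by (auto intro: has_vector_derivative_transform_within[OF _ zero_less_one]
        simp: has_real_derivative_iff_has_vector_derivative)
  then have "u' l a = 0"
    using vector_derivative_unique_within_closed_interval[of a b a "\<lambda>x. 0" "u' l a" 0] a_less_b
    by simp
  then show False
    using u'_start by simp
qed

lemma dirichlet_eigenvalue_iff: "dirichlet_eigenvalue \<sigma> q \<rho> a b l \<longleftrightarrow> u l b = 0"
proof
  assume "dirichlet_eigenvalue \<sigma> q \<rho> a b l"
  then obtain y y' x where S: "sl_solution \<sigma> q \<rho> a b l y y'" and "y a = 0" "y b = 0"
    and x: "x \<in> {a..b}" "y x \<noteq> 0"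
    unfolding dirichlet_eigenvalue_def by blast
  have y_eq: "y t = y' a * u l t" if "t \<in> {a..b}" for t
    using solution_unique(1)[OF sl_solution_scale[OF u_solution[of l], where c="y' a"] S _ _ that]
      \<open>y a = 0\<close> u_start u'_start by simp
  then show "u l b = 0"
    using y_eq[OF x(1)] x(2) \<open>y b = 0\<close> a_less_b by auto
next
  assume "u l b = 0"
  then show "dirichlet_eigenvalue \<sigma> q \<rho> a b l"
    unfolding dirichlet_eigenvalue_def using u_solution u_start u_not_identically_zero by blast
qed

lemma u'_end_nonzero:
  assumes "u l b = 0"
  shows "u' l b \<noteq> 0"
proof
  assume "u' l b = 0"
  interpret reflected: sl_coefficients "-b" "-a" "\<lambda>x. \<sigma> (-x)" "\<lambda>x. q (-x)" "\<lambda>x. \<rho> (-x)" s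
    by (rule reflect)
  have "u l x = 0" if "x \<in> {a..b}" for x
  proof -
    have "-x \<in> {-b..-a}"
      using that by simp
    from reflected.solution_unique(1)[OF sl_solution_zero sl_solution_reflect[OF u_solution[of l]] _ _ this]
    show ?thesis
      using assms \<open>u' l b = 0\<close> by simp
  qed
  then show False
    using u_not_identically_zero by blast
qed

definition weyl_m :: "real \<Rightarrow> real" where
  "weyl_m l = \<sigma> b * u' l b / u l b"

definition weighted_inner :: "real \<Rightarrow> real \<Rightarrow> real" where
  "weighted_inner l \<mu> = integral {a..b} (\<lambda>t. \<rho> t * u l t * u \<mu> t)"

lemma u_lipschitz:
  obtains C where "\<And>\<mu> x. \<bar>\<mu> - l\<bar> \<le> 1 \<Longrightarrow> x \<in> {a..b} \<Longrightarrow>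
    solution_distance (u l) (u' l) (u \<mu>) (u' \<mu>) x \<le> C * \<bar>\<mu> - l\<bar>"
proof
  fix \<mu> x :: real assume \<mu>: "\<bar>\<mu> - l\<bar> \<le> 1" and x: "x \<in> {a..b}"
  have "\<bar>\<mu>\<bar> \<le> \<bar>l\<bar> + 1"
    using \<mu> by linarith
  from continuous_dependence[OF u_solution[of l] u_solution[of \<mu>] this x]
  show "solution_distance (u l) (u' l) (u \<mu>) (u' \<mu>) x \<le>
    integral {a..b} (\<lambda>t. \<bar>\<rho> t\<bar> * \<bar>u l t\<bar>) * exp (2 * integral {a..b} (\<lambda>t. 1/s + \<bar>q t\<bar> + (\<bar>l\<bar> + 1) * \<bar>\<rho> t\<bar>))
      * \<bar>\<mu> - l\<bar>"
    by (simp add: solution_distance_def u_start u'_start abs_minus_commute mult_ac)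
qed

lemma u_end_cont: "isCont (\<lambda>\<mu>. u \<mu> b) l"
  and quasi_derivative_end_cont: "isCont (\<lambda>\<mu>. \<sigma> b * u' \<mu> b) l"
proof -
  obtain C where C: "\<And>\<mu>. \<bar>\<mu> - l\<bar> \<le> 1 \<Longrightarrow> solution_distance (u l) (u' l) (u \<mu>) (u' \<mu>) b \<le> C * \<bar>\<mu> - l\<bar>"
    using u_lipschitz a_less_b by (metis atLeastAtMost_iff order_refl less_imp_le)
  show "isCont (\<lambda>\<mu>. u \<mu> b) l" "isCont (\<lambda>\<mu>. \<sigma> b * u' \<mu> b) l"
    by (rule isCont_if_lipschitz_at[of _ _ C], use C in \<open>force simp: solution_distance_def\<close>)+
qed

lemma weighted_inner_cont: "isCont (weighted_inner l) l"
proof -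
  obtain C where "\<And>\<mu> x. \<bar>\<mu> - l\<bar> \<le> 1 \<Longrightarrow> x \<in> {a..b} \<Longrightarrow>
      solution_distance (u l) (u' l) (u \<mu>) (u' \<mu>) x \<le> C * \<bar>\<mu> - l\<bar>"
    using u_lipschitz[of l] by blast
  then have C: "\<bar>u \<mu> x - u l x\<bar> \<le> C * \<bar>\<mu> - l\<bar>" if "\<bar>\<mu> - l\<bar> \<le> 1" "x \<in> {a..b}" for \<mu> x
    using that abs_ge_zero[of "\<sigma> x * u' \<mu> x - \<sigma> x * u' l x"]
    unfolding solution_distance_def by (smt (verit))
  define I where "I = integral {a..b} (\<lambda>t. \<bar>\<rho> t\<bar> * \<bar>u l t\<bar>)"
  have cont: "continuous_on {a..b} (\<lambda>t. \<rho> t * u l t * u \<mu> t)" for \<mu>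
    by (intro continuous_on_mult \<rho>_cont solution_cont[OF u_solution])
  show ?thesis
  proof (rule isCont_if_lipschitz_at[of _ _ "I * C"])
    fix \<mu> assume \<mu>: "\<bar>\<mu> - l\<bar> \<le> 1"
    have "weighted_inner l \<mu> - weighted_inner l l = integral {a..b} (\<lambda>t. \<rho> t * u l t * (u \<mu> t - u l t))"
      unfolding weighted_inner_def right_diff_distrib
      by (rule integral_diff[symmetric]) (auto intro: integrable_continuous_real cont)
    also have "\<bar>\<dots>\<bar> \<le> integral {a..b} (\<lambda>t. (\<bar>\<rho> t\<bar> * \<bar>u l t\<bar>) * (C * \<bar>\<mu> - l\<bar>))"
    proof (rule integral_norm_bound_integral[where 'a=real, unfolded real_norm_def])
      show "(\<lambda>t. \<rho> t * u l t * (u \<mu> t - u l t)) integrable_on {a..b}"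
        unfolding right_diff_distrib by (intro integrable_diff integrable_continuous_real cont)
      show "(\<lambda>t. (\<bar>\<rho> t\<bar> * \<bar>u l t\<bar>) * (C * \<bar>\<mu> - l\<bar>)) integrable_on {a..b}"
        by (intro integrable_continuous_real continuous_intros \<rho>_cont solution_cont[OF u_solution])
      fix t assume "t \<in> {a..b}"
      then show "\<bar>\<rho> t * u l t * (u \<mu> t - u l t)\<bar> \<le> (\<bar>\<rho> t\<bar> * \<bar>u l t\<bar>) * (C * \<bar>\<mu> - l\<bar>)"
        using C[OF \<mu>] unfolding abs_mult by (intro mult_left_mono) auto
    qed
    also have "\<dots> = I * C * \<bar>\<mu> - l\<bar>"
      by (simp add: I_def)
    finally show "\<bar>weighted_inner l \<mu> - weighted_inner l l\<bar> \<le> I * C * \<bar>\<mu> - l\<bar>" .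
  qed
qed

lemma green_identity:
  "((\<lambda>t. u l t * ((q t - \<mu> * \<rho> t) * u \<mu> t) + u' l t * (\<sigma> t * u' \<mu> t))
      has_integral (u l b * (\<sigma> b * u' \<mu> b))) {a..b}"
  using integration_by_parts_indefinite_integral[where W="\<lambda>x. \<sigma> x * u' \<mu> x",
      OF solution_deriv[OF u_solution] solution_deriv_cont[OF u_solution]
      solution_rhs_abs_int[OF u_solution]] u_solution a_less_b
  unfolding sl_solution_def by (simp add: u_start)

lemma wronskian_identity:
  "u l b * (\<sigma> b * u' \<mu> b) - u \<mu> b * (\<sigma> b * u' l b) = (l - \<mu>) * weighted_inner l \<mu>"
proof -
  have "((\<lambda>t. (l - \<mu>) * (\<rho> t * u l t * u \<mu> t)) has_integral
       (u l b * (\<sigma> b * u' \<mu> b) - u \<mu> b * (\<sigma> b * u' l b))) {a..b}"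
    using has_integral_diff[OF green_identity[of l \<mu>] green_identity[of \<mu> l]]
    by (rule has_integral_eq[rotated]) (simp add: algebra_simps)
  moreover have "((\<lambda>t. (l - \<mu>) * (\<rho> t * u l t * u \<mu> t)) has_integral (l - \<mu>) * weighted_inner l \<mu>) {a..b}"
    unfolding weighted_inner_def
    by (intro has_integral_mult_right integrable_integral integrable_continuous_real
        continuous_on_mult \<rho>_cont solution_cont[OF u_solution])
  ultimately show ?thesis
    by (rule has_integral_unique)
qed

lemma weighted_inner_pos:
  assumes "u l b \<noteq> 0"
  shows "weighted_inner l l > 0"
  unfolding weighted_inner_def
proof (rule integral_pos_if_continuous_nonneg[OF a_less_b])
  show "continuous_on {a..b} (\<lambda>t. \<rho> t * u l t * u l t)"
    by (intro continuous_on_mult \<rho>_cont solution_cont[OF u_solution])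
  show "0 \<le> \<rho> t * u l t * u l t" if "t \<in> {a..b}" for t
    using \<rho>_ge[OF that] r_pos by (simp add: mult.assoc)
  show "\<rho> b * u l b * u l b \<noteq> 0"
    using \<rho>_ge[of b] r_pos a_less_b assms by auto
qed (use a_less_b in auto)

lemma weyl_m_has_derivative:
  assumes u_b: "u l b \<noteq> 0"
  shows "(weyl_m has_real_derivative - weighted_inner l l / (u l b)\<^sup>2) (at l)"
  unfolding has_field_derivative_iff
proof -
  have u_lim: "((\<lambda>\<mu>. u \<mu> b) \<longlongrightarrow> u l b) (at l)"
    using u_end_cont by (simp add: isCont_def)
  have "eventually (\<lambda>\<mu>. - weighted_inner l \<mu> / (u \<mu> b * u l b) = (weyl_m \<mu> - weyl_m l) / (\<mu> - l)) (at l)"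
    using tendsto_imp_eventually_ne[OF u_lim u_b] eventually_neq_at_within[of l l UNIV]
  proof eventually_elim
    case (elim \<mu>)
    have "weyl_m \<mu> - weyl_m l = (l - \<mu>) * weighted_inner l \<mu> / (u \<mu> b * u l b)"
      using elim u_b wronskian_identity[of l \<mu>] unfolding weyl_m_def by (simp add: field_simps)
    then show ?case
      using elim by (simp add: divide_simps) (simp add: algebra_simps)
  qed
  moreover have "((\<lambda>\<mu>. - weighted_inner l \<mu> / (u \<mu> b * u l b)) \<longlongrightarrow> - weighted_inner l l / (u l b)\<^sup>2) (at l)"
    using weighted_inner_cont[of l] u_lim u_b unfolding isCont_def power2_eq_square
    by (intro tendsto_intros) auto
  ultimately show "((\<lambda>\<mu>. (weyl_m \<mu> - weyl_m l) / (\<mu> - l)) \<longlongrightarrow> - weighted_inner l l / (u l b)\<^sup>2) (at l within UNIV)"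
    by (simp add: tendsto_cong)
qed

lemma weyl_m_strict_decreasing:
  assumes "x < y" and no_zero: "\<And>t. x \<le> t \<Longrightarrow> t \<le> y \<Longrightarrow> u t b \<noteq> 0"
  shows "weyl_m y < weyl_m x"
proof (rule DERIV_neg_imp_decreasing[OF \<open>x < y\<close>])
  fix t assume "x \<le> t" "t \<le> y"
  then have "u t b \<noteq> 0"
    by (rule no_zero)
  then show "\<exists>d. (weyl_m has_real_derivative d) (at t) \<and> d < 0"
    using weyl_m_has_derivative weighted_inner_pos by (force intro!: divide_pos_pos)
qed

lemma weyl_m_cont: "u p b \<noteq> 0 \<Longrightarrow> (weyl_m \<longlongrightarrow> weyl_m p) (at p within S)"
  using DERIV_isCont[OF weyl_m_has_derivative]
  by (metis continuous_at_imp_continuous_at_within continuous_within)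

lemma weyl_m_at_infinity:
  assumes "u p b = 0" and "eventually (\<lambda>l. u l b \<noteq> 0) (at p within S)"
  shows "filterlim weyl_m at_infinity (at p within S)"
proof -
  have "((\<lambda>l. u l b) \<longlongrightarrow> 0) (at p within S)"
    using continuous_at_imp_continuous_at_within[OF u_end_cont[of p]] assms(1)
    unfolding continuous_within by simp
  then have denominator: "filterlim (\<lambda>l. u l b) (at 0) (at p within S)"
    using assms(2) by (rule filterlim_atI)
  have numerator: "((\<lambda>l. \<sigma> b * u' l b) \<longlongrightarrow> \<sigma> b * u' p b) (at p within S)"
    using continuous_at_imp_continuous_at_within[OF quasi_derivative_end_cont[of p]]
    unfolding continuous_within .
  have "\<sigma> b * u' p b \<noteq> 0"
    using u'_end_nonzero[OF assms(1)] \<sigma>_ge[of b] s_pos a_less_b by auto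
  with numerator denominator show ?thesis
    unfolding weyl_m_def[abs_def] by (rule filterlim_divide_at_infinity)
qed

lemma weyl_m_at_left_zero:
  assumes "u p b = 0" and "c < p" and no_zero: "\<And>l. l \<in> {c<..<p} \<Longrightarrow> u l b \<noteq> 0"
  shows "filterlim weyl_m at_bot (at_left p)"
proof (rule filterlim_at_bot_at_left_if_decreasing[OF _ \<open>c < p\<close>])
  show "weyl_m y < weyl_m x" if "c < x" "x < y" "y < p" for x y
    using that by (intro weyl_m_strict_decreasing no_zero) auto
  have "eventually (\<lambda>l. u l b \<noteq> 0) (at_left p)"
    using eventually_at_left_real[OF \<open>c < p\<close>] by eventually_elim (rule no_zero)
  then show "filterlim weyl_m at_infinity (at_left p)"
    by (rule weyl_m_at_infinity[OF \<open>u p b = 0\<close>])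
qed

lemma weyl_m_at_right_zero:
  assumes "u p b = 0" and "p < c" and no_zero: "\<And>l. l \<in> {p<..<c} \<Longrightarrow> u l b \<noteq> 0"
  shows "filterlim weyl_m at_top (at_right p)"
proof (rule filterlim_at_top_at_right_if_decreasing[OF _ \<open>p < c\<close>])
  show "weyl_m y < weyl_m x" if "p < x" "x < y" "y < c" for x y
    using that by (intro weyl_m_strict_decreasing no_zero) auto
  have "eventually (\<lambda>l. u l b \<noteq> 0) (at_right p)"
    using eventually_at_right_real[OF \<open>p < c\<close>] by eventually_elim (rule no_zero)
  then show "filterlim weyl_m at_infinity (at_right p)"
    by (rule weyl_m_at_infinity[OF \<open>u p b = 0\<close>])
qed

lemma weyl_m_at_left:
  assumes "c < p" and "\<And>l. l \<in> {c<..<p} \<Longrightarrow> u l b \<noteq> 0"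
  shows "filterlim weyl_m at_bot (at_left p) \<or> (\<exists>d. (weyl_m \<longlongrightarrow> d) (at_left p))"
proof (cases "u p b = 0")
  case True
  then show ?thesis
    using weyl_m_at_left_zero[OF True assms] by blast
next
  case False
  then show ?thesis
    by (intro disjI2 exI[of _ "weyl_m p"] weyl_m_cont)
qed

lemma weyl_m_at_right:
  assumes "p < c" and "\<And>l. l \<in> {p<..<c} \<Longrightarrow> u l b \<noteq> 0"
  shows "filterlim weyl_m at_top (at_right p) \<or> (\<exists>d. (weyl_m \<longlongrightarrow> d) (at_right p))"
proof (cases "u p b = 0")
  case True
  then show ?thesis
    using weyl_m_at_right_zero[OF True assms] by blast
next
  case False
  then show ?thesis
    by (intro disjI2 exI[of _ "weyl_m p"] weyl_m_cont)
qed

lemma energy_identity: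
  "u l b * (\<sigma> b * u' l b) = integral {a..b} (\<lambda>t. q t * (u l t)\<^sup>2)
     - l * integral {a..b} (\<lambda>t. \<rho> t * (u l t)\<^sup>2) + integral {a..b} (\<lambda>t. \<sigma> t * (u' l t)\<^sup>2)"
proof -
  have u_cont: "continuous_on {a..b} (u l)" and u'_cont: "continuous_on {a..b} (u' l)"
    using solution_cont[OF u_solution] solution_deriv_cont[OF u_solution] by blast+
  have "(\<lambda>t. q t * (u l t)\<^sup>2) integrable_on {a..b}"
    using absolutely_integrable_mult_continuous[OF continuous_on_power[OF u_cont] q_int]
      set_lebesgue_integral_eq_integral(1) by blast
  moreover have "(\<lambda>t. l * (\<rho> t * (u l t)\<^sup>2)) integrable_on {a..b}" "(\<lambda>t. \<sigma> t * (u' l t)\<^sup>2) integrable_on {a..b}"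
    by (intro integrable_continuous_real continuous_intros \<rho>_cont \<sigma>_cont u_cont u'_cont)+
  ultimately have "((\<lambda>t. q t * (u l t)\<^sup>2 - l * (\<rho> t * (u l t)\<^sup>2) + \<sigma> t * (u' l t)\<^sup>2) has_integral
      (integral {a..b} (\<lambda>t. q t * (u l t)\<^sup>2) - l * integral {a..b} (\<lambda>t. \<rho> t * (u l t)\<^sup>2)
        + integral {a..b} (\<lambda>t. \<sigma> t * (u' l t)\<^sup>2))) {a..b}"
    by (intro has_integral_add has_integral_diff) (auto simp: has_integral_integral)
  moreover have "((\<lambda>t. q t * (u l t)\<^sup>2 - l * (\<rho> t * (u l t)\<^sup>2) + \<sigma> t * (u' l t)\<^sup>2) has_integral
      (u l b * (\<sigma> b * u' l b))) {a..b}"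
    using green_identity[of l l] by (rule has_integral_eq[rotated]) (simp add: algebra_simps power2_eq_square)
  ultimately show ?thesis
    by (rule has_integral_unique[rotated])
qed

lemma end_value_square_bound:
  assumes "t > 0"
  shows "(u l b)\<^sup>2 \<le> t * integral {a..b} (\<lambda>x. (u l x)\<^sup>2) + integral {a..b} (\<lambda>x. (u' l x)\<^sup>2) / t"
proof -
  have u_cont: "continuous_on {a..b} (u l)" and u'_cont: "continuous_on {a..b} (u' l)"
    using solution_cont[OF u_solution] solution_deriv_cont[OF u_solution] by blast+
  have "((\<lambda>x. 2 * u l x * u' l x) has_integral ((u l b)\<^sup>2 - (u l a)\<^sup>2)) {a..b}"
    using a_less_b
    by (intro fundamental_theorem_of_calculus)
      (auto simp flip: has_real_derivative_iff_has_vector_derivative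
        intro!: derivative_eq_intros solution_deriv[OF u_solution])
  then have "(u l b)\<^sup>2 = integral {a..b} (\<lambda>x. 2 * u l x * u' l x)"
    by (simp add: u_start integral_unique)
  also have "\<dots> \<le> integral {a..b} (\<lambda>x. t * (u l x)\<^sup>2 + (u' l x)\<^sup>2 / t)"
  proof (rule integral_le)
    show "(\<lambda>x. 2 * u l x * u' l x) integrable_on {a..b}"
      "(\<lambda>x. t * (u l x)\<^sup>2 + (u' l x)\<^sup>2 / t) integrable_on {a..b}"
      using assms by (intro integrable_continuous_real continuous_intros u_cont u'_cont; simp)+
    fix x
    have "0 \<le> (t * u l x - u' l x)\<^sup>2 / t"
      using assms by simp
    then show "2 * u l x * u' l x \<le> t * (u l x)\<^sup>2 + (u' l x)\<^sup>2 / t"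
      using assms by (simp add: field_simps power2_eq_square)
  qed
  also have "\<dots> = t * integral {a..b} (\<lambda>x. (u l x)\<^sup>2) + integral {a..b} (\<lambda>x. (u' l x)\<^sup>2) / t"
    using assms by (subst integral_add) (auto intro!: integrable_continuous_real continuous_intros u_cont u'_cont)
  finally show ?thesis .
qed

lemma weyl_m_lower_bound:
  assumes u_b: "u l b \<noteq> 0" and "t > 0" and t_le: "s * t\<^sup>2 \<le> - l * r"
  shows "s * t \<le> weyl_m l"
proof -
  define A where "A = integral {a..b} (\<lambda>x. (u l x)\<^sup>2)"
  define B where "B = integral {a..b} (\<lambda>x. (u' l x)\<^sup>2)"
  define P where "P = integral {a..b} (\<lambda>x. \<rho> x * (u l x)\<^sup>2)"
  have u_cont: "continuous_on {a..b} (u l)" and u'_cont: "continuous_on {a..b} (u' l)"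
    using solution_cont[OF u_solution] solution_deriv_cont[OF u_solution] by blast+
  have "0 \<le> integral {a..b} (\<lambda>x. q x * (u l x)\<^sup>2)"
    by (intro q_nonneg continuous_on_power u_cont) simp
  moreover have "s * B \<le> integral {a..b} (\<lambda>x. \<sigma> x * (u' l x)\<^sup>2)"
    unfolding B_def integral_mult_right[symmetric] using \<sigma>_ge
    by (intro integral_le mult_right_mono integrable_continuous_real continuous_on_mult
        continuous_on_const continuous_on_power \<sigma>_cont u'_cont) auto
  moreover have "- l * (r * A) \<le> - l * P"
  proof (rule mult_left_mono)
    show "r * A \<le> P"
      unfolding A_def P_def integral_mult_right[symmetric] using \<rho>_ge
      by (intro integral_le mult_right_mono integrable_continuous_real continuous_on_mult
          continuous_on_const continuous_on_power \<rho>_cont u_cont) auto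
    have "0 < s * t\<^sup>2"
      using s_pos \<open>t > 0\<close> by simp
    then have "0 < - l * r"
      using t_le by linarith
    then show "0 \<le> - l"
      using r_pos by (simp add: mult_less_0_iff)
  qed
  ultimately have "- l * r * A + s * B \<le> u l b * (\<sigma> b * u' l b)"
    unfolding energy_identity P_def by (simp add: algebra_simps)
  moreover have "s * t * (u l b)\<^sup>2 \<le> s * t * (t * A + B / t)"
    using end_value_square_bound[OF \<open>t > 0\<close>, of l] s_pos \<open>t > 0\<close>
    by (intro mult_left_mono) (auto simp: A_def B_def)
  moreover have "s * t * (t * A + B / t) = s * t\<^sup>2 * A + s * B"
    using \<open>t > 0\<close> by (simp add: field_simps power2_eq_square)
  moreover have "s * t\<^sup>2 * A \<le> - l * r * A"
    using t_le unfolding A_def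
    by (intro mult_right_mono integral_nonneg integrable_continuous_real continuous_on_power u_cont) auto
  ultimately have "s * t * (u l b)\<^sup>2 \<le> u l b * (\<sigma> b * u' l b)"
    by linarith
  moreover have "weyl_m l = u l b * (\<sigma> b * u' l b) / (u l b)\<^sup>2"
    using u_b by (simp add: weyl_m_def power2_eq_square)
  moreover have "(u l b)\<^sup>2 > 0"
    using u_b by simp
  ultimately show ?thesis
    by (simp add: pos_le_divide_eq)
qed

lemma weyl_m_at_bot:
  assumes "\<And>l. l < L \<Longrightarrow> u l b \<noteq> 0"
  shows "filterlim weyl_m at_top at_bot"
  unfolding filterlim_at_top
proof
  fix Z :: real
  define t where "t = \<bar>Z\<bar> / s + 1"
  have "t > 0" "s * t = \<bar>Z\<bar> + s"
    using s_pos by (auto simp: t_def field_simps)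
  then have "Z \<le> s * t"
    using s_pos by linarith
  have "Z \<le> weyl_m l" if "l \<le> min (L - 1) (- (s * t\<^sup>2) / r)" for l
  proof -
    have "s * t\<^sup>2 \<le> - l * r"
      using that r_pos by (simp add: field_simps)
    with assms[of l] that have "s * t \<le> weyl_m l"
      by (intro weyl_m_lower_bound[OF _ \<open>t > 0\<close>]) auto
    with \<open>Z \<le> s * t\<close> show ?thesis
      by linarith
  qed
  then show "eventually (\<lambda>l. Z \<le> weyl_m l) at_bot"
    unfolding eventually_at_bot_linorder by blast
qed

end

section \<open>Gluing two Weyl functions at the interface\<close>

lemma dirichlet_shooting_intro:
  assumes "a < b" and "continuous_on {a..b} \<sigma>" "continuous_on {a..b} \<rho>"
    and "uniformly_positive_on {a..b} \<sigma>" "uniformly_positive_on {a..b} \<rho>"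
    and "q absolutely_integrable_on {a..b}"
    and "\<And>h. continuous_on {a..b} h \<Longrightarrow> (\<And>x. x \<in> {a..b} \<Longrightarrow> 0 \<le> h x) \<Longrightarrow>
           0 \<le> integral {a..b} (\<lambda>t. q t * h t)"
    and "\<And>l. sl_solution \<sigma> q \<rho> a b l (u l) (u' l)" "\<And>l. u l a = 0" "\<And>l. u' l a = 1"
  obtains s r where "dirichlet_shooting a b \<sigma> q \<rho> s u u' r"
proof -
  obtain s where "s > 0" "\<And>x. x \<in> {a..b} \<Longrightarrow> s \<le> \<sigma> x"
    using assms(4) unfolding uniformly_positive_on_def by blast
  moreover obtain r where "r > 0" "\<And>x. x \<in> {a..b} \<Longrightarrow> r \<le> \<rho> x"
    using assms(5) unfolding uniformly_positive_on_def by blast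
  ultimately have "dirichlet_shooting a b \<sigma> q \<rho> s u u' r"
    using assms by (intro dirichlet_shooting.intro sl_coefficients.intro dirichlet_shooting_axioms.intro) auto
  then show thesis
    by (rule that)
qed

lemma dirichlet_shooting_reflect_intro:
  assumes "a < b" and "continuous_on {a..b} \<sigma>" "continuous_on {a..b} \<rho>"
    and "uniformly_positive_on {a..b} \<sigma>" "uniformly_positive_on {a..b} \<rho>"
    and q_int: "q absolutely_integrable_on {a..b}" and q_nonneg: "AE x in lborel. x \<in> {a..b} \<longrightarrow> 0 \<le> q x"
    and "\<And>l. sl_solution \<sigma> q \<rho> a b l (v l) (v' l)" "\<And>l. v l b = 0" "\<And>l. v' l b = -1"
  obtains s r where "dirichlet_shooting (-b) (-a) (\<lambda>x. \<sigma> (-x)) (\<lambda>x. q (-x)) (\<lambda>x. \<rho> (-x)) s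
    (\<lambda>l x. v l (-x)) (\<lambda>l x. - v' l (-x)) r"
  by (rule dirichlet_shooting_intro[of "-b" "-a" "\<lambda>x. \<sigma> (-x)" "\<lambda>x. \<rho> (-x)" "\<lambda>x. q (-x)"
        "\<lambda>l x. v l (-x)" "\<lambda>l x. - v' l (-x)"])
    (use assms continuous_on_reflect_real[OF assms(2)] continuous_on_reflect_real[OF assms(3)]
      uniformly_positive_on_reflect[OF assms(4)] uniformly_positive_on_reflect[OF assms(5)]
      integral_mult_nonneg_AE_reflect[OF q_nonneg q_int] sl_solution_reflect[OF assms(8)] in auto)

locale interface_problem =
  left: dirichlet_shooting a b \<sigma>1 q1 \<rho>1 s1 u1 u1' r1 +
  right: dirichlet_shooting a b \<sigma>2 q2 \<rho>2 s2 u2 u2' r2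
  for a b \<sigma>1 q1 \<rho>1 s1 u1 u1' r1 \<sigma>2 q2 \<rho>2 s2 u2 u2' r2
begin

definition pole :: "real \<Rightarrow> bool" where
  "pole l \<longleftrightarrow> u1 l b = 0 \<or> u2 l b = 0"

definition weyl_sum :: "real \<Rightarrow> real" where
  "weyl_sum l = left.weyl_m l + right.weyl_m l"

lemma weyl_sum_strict_decreasing:
  assumes "x < y" and "\<And>t. x \<le> t \<Longrightarrow> t \<le> y \<Longrightarrow> \<not> pole t"
  shows "weyl_sum y < weyl_sum x"
  using left.weyl_m_strict_decreasing[OF assms(1)] right.weyl_m_strict_decreasing[OF assms(1)] assms(2)
  unfolding weyl_sum_def pole_def by (meson add_strict_mono)

lemma weyl_sum_at_bot:
  assumes "\<And>l. l < L \<Longrightarrow> \<not> pole l"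
  shows "filterlim weyl_sum at_top at_bot"
  unfolding weyl_sum_def[abs_def]
  using assms unfolding pole_def
  by (intro filterlim_at_top_add_at_top left.weyl_m_at_bot right.weyl_m_at_bot) auto

lemma weyl_sum_at_left_pole:
  assumes "c < p" "pole p" and no_pole: "\<And>l. l \<in> {c<..<p} \<Longrightarrow> \<not> pole l"
  shows "filterlim weyl_sum at_bot (at_left p)"
  unfolding weyl_sum_def[abs_def]
proof (rule filterlim_at_bot_add_at_bot_or_tendsto)
  have "u1 l b \<noteq> 0" "u2 l b \<noteq> 0" if "l \<in> {c<..<p}" for l
    using no_pole[OF that] by (auto simp: pole_def)
  then show "filterlim left.weyl_m at_bot (at_left p) \<or> (\<exists>d. (left.weyl_m \<longlongrightarrow> d) (at_left p))"
    "filterlim right.weyl_m at_bot (at_left p) \<or> (\<exists>d. (right.weyl_m \<longlongrightarrow> d) (at_left p))"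
    "filterlim left.weyl_m at_bot (at_left p) \<or> filterlim right.weyl_m at_bot (at_left p)"
    using left.weyl_m_at_left[OF \<open>c < p\<close>] right.weyl_m_at_left[OF \<open>c < p\<close>]
      left.weyl_m_at_left_zero[OF _ \<open>c < p\<close>] right.weyl_m_at_left_zero[OF _ \<open>c < p\<close>] \<open>pole p\<close>
    unfolding pole_def by blast+
qed

lemma weyl_sum_at_right_pole:
  assumes "p < c" "pole p" and no_pole: "\<And>l. l \<in> {p<..<c} \<Longrightarrow> \<not> pole l"
  shows "filterlim weyl_sum at_top (at_right p)"
  unfolding weyl_sum_def[abs_def]
proof (rule filterlim_at_top_add_at_top_or_tendsto)
  have "u1 l b \<noteq> 0" "u2 l b \<noteq> 0" if "l \<in> {p<..<c}" for l
    using no_pole[OF that] by (auto simp: pole_def)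
  then show "filterlim left.weyl_m at_top (at_right p) \<or> (\<exists>d. (left.weyl_m \<longlongrightarrow> d) (at_right p))"
    "filterlim right.weyl_m at_top (at_right p) \<or> (\<exists>d. (right.weyl_m \<longlongrightarrow> d) (at_right p))"
    "filterlim left.weyl_m at_top (at_right p) \<or> filterlim right.weyl_m at_top (at_right p)"
    using left.weyl_m_at_right[OF \<open>p < c\<close>] right.weyl_m_at_right[OF \<open>p < c\<close>]
      left.weyl_m_at_right_zero[OF _ \<open>p < c\<close>] right.weyl_m_at_right_zero[OF _ \<open>p < c\<close>] \<open>pole p\<close>
    unfolding pole_def by blast+
qed

lemma filterlim_transfer_off_poles:
  assumes F_eq: "\<And>l. \<not> pole l \<Longrightarrow> F l = weyl_sum l" and "eventually (\<lambda>l. \<not> pole l) G"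
    and "filterlim weyl_sum H G"
  shows "filterlim F H G"
proof -
  have "eventually (\<lambda>l. weyl_sum l = F l) G"
    using assms(2) by eventually_elim (simp add: F_eq)
  with assms(3) show ?thesis
    by (simp add: filterlim_cong)
qed

lemma monotone_between_poles:
  fixes F :: "real \<Rightarrow> real" and \<mu> :: "nat \<Rightarrow> real"
  assumes F_eq: "\<And>l. \<not> pole l \<Longrightarrow> F l = weyl_sum l"
    and \<mu>_mono: "\<And>n. n \<ge> 1 \<Longrightarrow> \<mu> n \<le> \<mu> (Suc n)"
    and pole_iff: "\<And>l. pole l \<longleftrightarrow> (\<exists>n\<ge>1. \<mu> n = l)"
  shows "(\<forall>x\<in>{..<\<mu> 1}. \<forall>y\<in>{..<\<mu> 1}. x < y \<longrightarrow> F y < F x) \<and>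
         filterlim F at_top at_bot \<and> filterlim F at_bot (at_left (\<mu> 1)) \<and>
         (\<forall>n\<ge>1. \<mu> n \<noteq> \<mu> (Suc n) \<longrightarrow>
            (\<forall>x\<in>{\<mu> n<..<\<mu> (Suc n)}. \<forall>y\<in>{\<mu> n<..<\<mu> (Suc n)}. x < y \<longrightarrow> F y < F x) \<and>
            filterlim F at_top (at_right (\<mu> n)) \<and> filterlim F at_bot (at_left (\<mu> (Suc n))))"
proof -
  have below_first: "\<not> pole l" if "l < \<mu> 1" for l
    using that mono_seq_ge_first[where \<mu>=\<mu>, OF \<mu>_mono] unfolding pole_iff by force
  have between: "\<not> pole l" if "n \<ge> 1" "\<mu> n < l" "l < \<mu> (Suc n)" for n l
    using that mono_seq_ge_Suc_if_less[where \<mu>=\<mu>, OF \<mu>_mono] unfolding pole_iff by force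
  have poles: "pole (\<mu> n)" if "n \<ge> 1" for n
    using that pole_iff by blast
  have decreasing: "F y < F x" if "x < y" "\<And>t. x \<le> t \<Longrightarrow> t \<le> y \<Longrightarrow> \<not> pole t" for x y
    using weyl_sum_strict_decreasing[OF that] that F_eq by simp
  have "eventually (\<lambda>l. \<not> pole l) at_bot"
    unfolding eventually_at_bot_linorder using below_first by (intro exI[of _ "\<mu> 1 - 1"]) auto
  then have "filterlim F at_top at_bot"
    using below_first by (intro filterlim_transfer_off_poles[OF F_eq] weyl_sum_at_bot) auto
  moreover have "filterlim F at_bot (at_left (\<mu> 1))"
    using eventually_at_left_real[of "\<mu> 1 - 1" "\<mu> 1"] below_first
    by (intro filterlim_transfer_off_poles[OF F_eq] weyl_sum_at_left_pole[of "\<mu> 1 - 1"] poles)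
      (auto elim: eventually_mono)
  moreover have "filterlim F at_top (at_right (\<mu> n))" "filterlim F at_bot (at_left (\<mu> (Suc n)))"
    if "n \<ge> 1" "\<mu> n \<noteq> \<mu> (Suc n)" for n
  proof -
    have "\<mu> n < \<mu> (Suc n)"
      using \<mu>_mono[OF \<open>n \<ge> 1\<close>] that(2) by simp
    then show "filterlim F at_top (at_right (\<mu> n))" "filterlim F at_bot (at_left (\<mu> (Suc n)))"
      using eventually_at_right_real[of "\<mu> n" "\<mu> (Suc n)"] eventually_at_left_real[of "\<mu> n" "\<mu> (Suc n)"]
        between[OF \<open>n \<ge> 1\<close>] \<open>n \<ge> 1\<close>
      by (auto intro!: filterlim_transfer_off_poles[OF F_eq] weyl_sum_at_right_pole weyl_sum_at_left_pole poles
          elim: eventually_mono)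
  qed
  ultimately show ?thesis
    using decreasing below_first between \<mu>_mono by (auto 4 4)
qed

end

theorem lemma3p2:
  fixes \<rho>1 \<sigma>1 q1 \<rho>2 \<sigma>2 q2 :: "real \<Rightarrow> real"
    and u ux v vx :: "real \<Rightarrow> real \<Rightarrow> real"
    and \<mu> :: "nat \<Rightarrow> real"
    and F :: "real \<Rightarrow> real"
  assumes H2: "H2_on (-1) 0 \<rho>1" "H2_on (-1) 0 \<sigma>1" "H2_on 0 1 \<rho>2" "H2_on 0 1 \<sigma>2"
    and pos: "uniformly_positive_on {-1..0} \<rho>1" "uniformly_positive_on {-1..0} \<sigma>1"
             "uniformly_positive_on {0..1} \<rho>2" "uniformly_positive_on {0..1} \<sigma>2"
    and L1: "q1 absolutely_integrable_on {-1..0}" "q2 absolutely_integrable_on {0..1}"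
    and nonneg: "AE x in lborel. x \<in> {-1..0} \<longrightarrow> 0 \<le> q1 x"
                "AE x in lborel. x \<in> {0..1} \<longrightarrow> 0 \<le> q2 x"
    and u_sol: "\<And>lam. sl_solution \<sigma>1 q1 \<rho>1 (-1) 0 lam (u lam) (ux lam)"
    and u_init: "\<And>lam. u lam (-1) = 0" "\<And>lam. ux lam (-1) = 1"
    and v_sol: "\<And>lam. sl_solution \<sigma>2 q2 \<rho>2 0 1 lam (v lam) (vx lam)"
    and v_init: "\<And>lam. v lam 1 = 0" "\<And>lam. vx lam 1 = -1"
    and \<mu>_mono: "\<And>n. n \<ge> 1 \<Longrightarrow> \<mu> n \<le> \<mu> (Suc n)"
    and \<mu>_fin: "\<And>t. finite {n. n \<ge> 1 \<and> \<mu> n = t}"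
    and \<mu>_count: "\<And>t. card {n. n \<ge> 1 \<and> \<mu> n = t} =
        (if dirichlet_eigenvalue \<sigma>1 q1 \<rho>1 (-1) 0 t then 1 else 0) +
        (if dirichlet_eigenvalue \<sigma>2 q2 \<rho>2 0 1 t then 1 else 0)"
    and F_def: "F \<equiv> (\<lambda>lam. (\<sigma>1 0 * v lam 0 * ux lam 0 - \<sigma>2 0 * u lam 0 * vx lam 0) / (u lam 0 * v lam 0))"
  shows "(\<forall>x\<in>{..<\<mu> 1}. \<forall>y\<in>{..<\<mu> 1}. x < y \<longrightarrow> F y < F x) \<and>
         filterlim F at_top at_bot \<and> filterlim F at_bot (at_left (\<mu> 1)) \<and>
         (\<forall>n\<ge>1. \<mu> n \<noteq> \<mu> (Suc n) \<longrightarrow>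
            (\<forall>x\<in>{\<mu> n<..<\<mu> (Suc n)}. \<forall>y\<in>{\<mu> n<..<\<mu> (Suc n)}. x < y \<longrightarrow> F y < F x) \<and>
            filterlim F at_top (at_right (\<mu> n)) \<and> filterlim F at_bot (at_left (\<mu> (Suc n))))"
proof -
  obtain s1 r1 where left: "dirichlet_shooting (-1) 0 \<sigma>1 q1 \<rho>1 s1 u ux r1"
    by (rule dirichlet_shooting_intro[of "-1" 0 \<sigma>1 \<rho>1 q1 u ux])
      (use H2_on_imp_continuous_on H2 pos L1 integral_mult_nonneg_AE[OF nonneg(1) L1(1)] u_sol u_init in auto)
  obtain s2 r2 where right: "dirichlet_shooting (-1) 0 (\<lambda>x. \<sigma>2 (-x)) (\<lambda>x. q2 (-x)) (\<lambda>x. \<rho>2 (-x)) s2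
      (\<lambda>l x. v l (-x)) (\<lambda>l x. - vx l (-x)) r2"
    by (rule dirichlet_shooting_reflect_intro[of 0 1 \<sigma>2 \<rho>2 q2 v vx])
      (use H2_on_imp_continuous_on H2 pos L1 nonneg v_sol v_init in auto)
  interpret interface_problem "-1" 0 \<sigma>1 q1 \<rho>1 s1 u ux r1 "\<lambda>x. \<sigma>2 (-x)" "\<lambda>x. q2 (-x)" "\<lambda>x. \<rho>2 (-x)" s2
      "\<lambda>l x. v l (-x)" "\<lambda>l x. - vx l (-x)" r2
    using left right by (rule interface_problem.intro)
  have pole_iff: "pole l \<longleftrightarrow> (\<exists>n\<ge>1. \<mu> n = l)" for l
  proof -
    have "pole l \<longleftrightarrow> dirichlet_eigenvalue \<sigma>1 q1 \<rho>1 (-1) 0 l \<or> dirichlet_eigenvalue \<sigma>2 q2 \<rho>2 0 1 l"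
      using left.dirichlet_eigenvalue_iff right.dirichlet_eigenvalue_iff
        dirichlet_eigenvalue_reflect[where \<sigma>=\<sigma>2 and q=q2 and \<rho>=\<rho>2 and a=0 and b=1]
      unfolding pole_def by simp
    also have "\<dots> \<longleftrightarrow> card {n. n \<ge> 1 \<and> \<mu> n = l} \<noteq> 0"
      using \<mu>_count[of l] by simp
    also have "\<dots> \<longleftrightarrow> (\<exists>n\<ge>1. \<mu> n = l)"
      using \<mu>_fin[of l] by auto
    finally show ?thesis .
  qed
  have "F l = weyl_sum l" if "\<not> pole l" for l
    using that unfolding F_def pole_def weyl_sum_def left.weyl_m_def right.weyl_m_def
    by (simp add: field_simps)
  then show ?thesis
    by (rule monotone_between_poles[OF _ \<mu>_mono pole_iff])
qed

end
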